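(* Let $G$ be a distribution function on $\mathbb R$ whose support is $\mathbb J=\bigcup_{\alpha=1}^m[a_\alpha,b_\alpha]$, a union of pairwise disjoint intervals, such that $G$ has a bounded absolutely continuous density $g$ with $g(x)\sim|x-c|^{1/2}$ near each endpoint $c$ of the support. Let $F$ be any distribution function. Let $v>0$ and $0<\varepsilon<\frac12$ with $\varepsilon<\frac12\min_\alpha(b_\alpha-a_\alpha)$ and $2(\sqrt2+1)v\le\varepsilon^{3/2}$, and let $V>v$. For $x\in\mathbb J'_\varepsilon$ put $v'=v/\sqrt{\gamma(x)}$. Then $$\sup_x|F(x)-G(x)|\le 2\int_{-\infty}^\infty|S_F(u+iV)-S_G(u+iV)|\,du+C_1v+C_2\varepsilon^{3/2}+2\sup_{x\in\mathbb J'_\varepsilon}\int_{v'}^V|S_F(x+iu)-S_G(x+iu)|\,du,$$ where $C_1,C_2>0$ are absolute constants.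
   Context: For $x\in\mathbb J$, $\gamma(x)=\min_\alpha\{|x-a_\alpha|,|b_\alpha-x|\}$. For $\varepsilon>0$, $\mathbb J_\alpha^{(\varepsilon)}=\{x\in[a_\alpha,b_\alpha]:\gamma(x)\ge\varepsilon\}$ and $\mathbb J'_\varepsilon=\bigcup_{\alpha=1}^m\mathbb J_\alpha^{(\varepsilon/2)}$. For a distribution function $F$, $S_F(z)=\int_{-\infty}^\infty\frac{1}{x-z}\,dF(x)$ is its Stieltjes transform ($\operatorname{Im}z>0$). *)

theory Defs
  imports "HOL-Probability.Probability"
begin

definition measure_support :: "real measure \<Rightarrow> real set" where
  "measure_support M = {x. \<forall>e>0. 0 < measure M (ball x e)}"

definition stieltjes :: "real measure \<Rightarrow> complex \<Rightarrow> complex" where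
  "stieltjes M z = (LINT x|M. 1 / (complex_of_real x - z))"

definition abs_cont_on :: "real set \<Rightarrow> (real \<Rightarrow> real) \<Rightarrow> bool" where
  "abs_cont_on S f \<longleftrightarrow> (\<forall>e>0. \<exists>d>0. \<forall>n::nat. \<forall>s t :: nat \<Rightarrow> real.
     (\<forall>i<n. s i \<le> t i \<and> {s i..t i} \<subseteq> S) \<and>
     (\<forall>i<n. \<forall>j<n. i \<noteq> j \<longrightarrow> t i \<le> s j \<or> t j \<le> s i) \<and>
     (\<Sum>i<n. t i - s i) < d \<longrightarrow> (\<Sum>i<n. \<bar>f (t i) - f (s i)\<bar>) < e)"

text \<open>Intervals indexed by alpha < m (i.e. \<alpha> = 1..m in the paper).\<close>
definition suppJ :: "nat \<Rightarrow> (nat \<Rightarrow> real) \<Rightarrow> (nat \<Rightarrow> real) \<Rightarrow> real set" where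
  "suppJ m a b = (\<Union>\<alpha><m. {a \<alpha>..b \<alpha>})"

definition gam :: "nat \<Rightarrow> (nat \<Rightarrow> real) \<Rightarrow> (nat \<Rightarrow> real) \<Rightarrow> real \<Rightarrow> real" where
  "gam m a b x = Min ((\<lambda>\<alpha>. min \<bar>x - a \<alpha>\<bar> \<bar>b \<alpha> - x\<bar>) ` {..<m})"

definition Jeps :: "nat \<Rightarrow> (nat \<Rightarrow> real) \<Rightarrow> (nat \<Rightarrow> real) \<Rightarrow> nat \<Rightarrow> real \<Rightarrow> real set" where
  "Jeps m a b \<alpha> e = {x \<in> {a \<alpha>..b \<alpha>}. gam m a b x \<ge> e}"

definition Jprime :: "nat \<Rightarrow> (nat \<Rightarrow> real) \<Rightarrow> (nat \<Rightarrow> real) \<Rightarrow> real \<Rightarrow> real set" where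
  "Jprime m a b e = (\<Union>\<alpha><m. Jeps m a b \<alpha> (e / 2))"

end

theory Submission
  imports Defs
begin

(* Bai's smoothing argument with the Cauchy kernel. Convolving F - G with the Cauchy density of
   scale y gives the difference of the Cauchy-smoothed distribution functions; by a contour
   argument this is a horizontal integral of Im (S_F - S_G) at height V minus a vertical integral
   of Re (S_F - S_G) over [y, V], hence bounded by the two Stieltjes integrals of the statement.
   Since two thirds of the Cauchy mass lies in [-sqrt 3 y, sqrt 3 y], monotonicity turns a bound
   on the smoothed difference at a point x1 of J'_eps into a bound on F - G at a nearby x0, up to
   the G-mass between x0 and x1 +- sqrt 3 y and half of sup |F - G|, which is then absorbed.
   The square-root edges give g <= C sqrt (gamma), which controls that mass: deep inside the
   support one shifts x0 by sqrt 6 v / sqrt (gamma x0), costing O(v); near an edge the mass lies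
   within 4 eps of an endpoint on a set of length O(eps), costing O(eps^(3/2)). *)

lemma sum_squares_pos: "0 < (y::real) \<Longrightarrow> 0 < s\<^sup>2 + y\<^sup>2"
  by (simp add: add_nonneg_pos)

lemma ennreal_abs_integral_le:
  fixes f g :: "'a \<Rightarrow> real"
  assumes f: "integrable M f" and g [measurable]: "g \<in> borel_measurable M" and c: "0 \<le> c"
    and le: "\<And>u. \<bar>f u\<bar> \<le> c * g u"
  shows "ennreal \<bar>\<integral>u. f u \<partial>M\<bar> \<le> ennreal c * (\<integral>\<^sup>+ u. ennreal (g u) \<partial>M)"
proof -
  have "ennreal \<bar>\<integral>u. f u \<partial>M\<bar> \<le> (\<integral>\<^sup>+ u. ennreal \<bar>f u\<bar> \<partial>M)"
    using integral_norm_bound_ennreal[OF f] by simp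
  also have "\<dots> \<le> (\<integral>\<^sup>+ u. ennreal c * ennreal (g u) \<partial>M)"
    using le c by (intro nn_integral_mono) (simp add: ennreal_leI flip: ennreal_mult')
  also have "\<dots> = ennreal c * (\<integral>\<^sup>+ u. ennreal (g u) \<partial>M)"
    by (rule nn_integral_cmult) simp
  finally show ?thesis .
qed

lemma ennreal_mult_enn2real: "X \<noteq> \<top> \<Longrightarrow> 0 \<le> c \<Longrightarrow> ennreal c * X = ennreal (c * enn2real X)"
  by (cases X) (auto simp: ennreal_mult)

lemma ennreal_sum_le_rearrange:
  fixes A B :: ennreal
  assumes "0 \<le> p" "0 \<le> q" "p \<le> p'" "q \<le> q'"
  shows "ennreal (p + q) + (A + B) \<le> 2 * A + ennreal p' + ennreal q' + 2 * B"
proof -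
  have "ennreal (p + q) \<le> ennreal p' + ennreal q'"
    using assms by (simp add: ennreal_plus[symmetric] del: ennreal_plus)
  moreover have "A + B \<le> 2 * A + 2 * B" by (intro add_mono) (auto simp: mult_2)
  ultimately have "ennreal (p + q) + (A + B) \<le> (ennreal p' + ennreal q') + (2 * A + 2 * B)"
    by (rule add_mono)
  then show ?thesis by (simp add: ac_simps)
qed

lemma nn_integral_indicator_min_le:
  fixes c V :: real
  shows "(\<integral>\<^sup>+ u. f u * indicator {min c V..V} u \<partial>lborel) \<le> (\<integral>\<^sup>+ u. f u * indicator {c..V} u \<partial>lborel)"
proof (cases "c \<le> V")
  case False
  then have "{min c V..V} = {V}" by (simp add: min_def)
  then have "AE u in lborel. f u * indicator {min c V..V} u = 0"
    using AE_lborel_singleton[of V] by (auto elim!: eventually_mono)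
  from nn_integral_cong_AE[OF this] show ?thesis by simp
qed (simp add: min_def)

lemma powr_three_halves:
  assumes "0 \<le> x"
  shows "x powr (3/2) = x * sqrt (x::real)"
proof -
  have "x powr (3/2) = x powr (1 + 1/2)" by simp
  also have "\<dots> = x powr 1 * x powr (1/2)" by (rule powr_add)
  finally have "x powr (3/2) = x powr 1 * x powr (1/2)" .
  then show ?thesis using assms by (simp add: powr_half_sqrt)
qed

lemma three_halves_ratio_ge_1:
  assumes "0 < \<delta>" "\<delta> < \<epsilon>"
  shows "1 \<le> 1 / (\<delta> * sqrt \<delta>) * (\<epsilon> * sqrt \<epsilon>)"
proof -
  have "\<delta> * sqrt \<delta> \<le> \<epsilon> * sqrt \<epsilon>" using assms by (intro mult_mono real_sqrt_le_mono) auto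
  then show ?thesis using assms by simp
qed

section \<open>The Cauchy kernel\<close>

definition cauchy_density :: "real \<Rightarrow> real \<Rightarrow> real" where
  "cauchy_density y s = y / (pi * (s\<^sup>2 + y\<^sup>2))"

definition cauchy_cdf :: "real \<Rightarrow> real \<Rightarrow> real" where
  "cauchy_cdf y r = 1/2 + arctan (r / y) / pi"

lemma cauchy_density_nonneg: "0 < y \<Longrightarrow> 0 \<le> cauchy_density y s"
  unfolding cauchy_density_def by (simp add: sum_squares_pos less_imp_le)

lemma pi_mult_cauchy_density: "0 < y \<Longrightarrow> pi * cauchy_density y s = y / (s\<^sup>2 + y\<^sup>2)"
  unfolding cauchy_density_def by simp

lemma cauchy_density_minus: "cauchy_density y (- s) = cauchy_density y s"
  unfolding cauchy_density_def by simp

lemma borel_measurable_cauchy_density [measurable]: "cauchy_density y \<in> borel_measurable borel"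
  unfolding cauchy_density_def by measurable

lemma cauchy_density_le: "0 < y \<Longrightarrow> cauchy_density y s \<le> 1 / (pi * y)"
proof -
  assume y: "0 < y"
  have "y / (pi * (s\<^sup>2 + y\<^sup>2)) \<le> y / (pi * y\<^sup>2)"
    using y by (intro divide_left_mono mult_left_mono) (auto simp: sum_squares_pos)
  also have "\<dots> = 1 / (pi * y)" using y by (simp add: power2_eq_square)
  finally show ?thesis unfolding cauchy_density_def .
qed

lemma cauchy_cdf_has_real_derivative:
  assumes y: "0 < y"
  shows "(cauchy_cdf y has_real_derivative cauchy_density y s) (at s)"
proof -
  have "(cauchy_cdf y has_real_derivative (inverse (1 + (s/y)\<^sup>2) * (1/y)) / pi) (at s)"
    unfolding cauchy_cdf_def using y by (auto intro!: derivative_eq_intros)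
  moreover have "(inverse (1 + (s/y)\<^sup>2) * (1/y)) / pi = cauchy_density y s"
    using y unfolding cauchy_density_def by (simp add: field_simps power2_eq_square)
  ultimately show ?thesis by simp
qed

lemma cauchy_cdf_minus: "cauchy_cdf y (- r) = 1 - cauchy_cdf y r"
  unfolding cauchy_cdf_def by (simp add: arctan_minus)

lemma cauchy_cdf_nonneg: "0 \<le> cauchy_cdf y r"
  unfolding cauchy_cdf_def using arctan_lbound[of "r / y"] by (simp add: field_simps)

lemma cauchy_cdf_le_1: "cauchy_cdf y r \<le> 1"
  using cauchy_cdf_nonneg[of y "- r"] by (simp add: cauchy_cdf_minus)

lemma borel_measurable_cauchy_cdf [measurable]: "cauchy_cdf y \<in> borel_measurable borel"
  unfolding cauchy_cdf_def by measurable

lemma nn_integral_cauchy_density_atLeast: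
  assumes y: "0 < y"
  shows "(\<integral>\<^sup>+ s. ennreal (cauchy_density y s) * indicator {r..} s \<partial>lborel) = ennreal (1 - cauchy_cdf y r)"
proof -
  have "filterlim (\<lambda>s. s / y) at_top at_top"
    unfolding divide_inverse
    by (rule filterlim_at_top_mult_tendsto_pos[OF tendsto_const]) (use y in \<open>auto simp: filterlim_ident\<close>)
  then have "(cauchy_cdf y \<longlongrightarrow> 1/2 + (pi/2) / pi) at_top"
    unfolding cauchy_cdf_def
    by (intro tendsto_add tendsto_divide tendsto_const filterlim_compose[OF tendsto_arctan_at_top]) auto
  then have "(cauchy_cdf y \<longlongrightarrow> 1) at_top" by simp
  from nn_integral_FTC_atLeast[OF _ cauchy_cdf_has_real_derivative[OF y] cauchy_density_nonneg[OF y] this]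
  show ?thesis by simp
qed

lemma nn_integral_cauchy_density_atMost:
  assumes y: "0 < y"
  shows "(\<integral>\<^sup>+ s. ennreal (cauchy_density y s) * indicator {..r} s \<partial>lborel) = ennreal (cauchy_cdf y r)"
proof -
  have "(\<integral>\<^sup>+ s. ennreal (cauchy_density y s) * indicator {..r} s \<partial>lborel)
      = (\<integral>\<^sup>+ s. ennreal (cauchy_density y (- s)) * indicator {..r} (- s) \<partial>lborel)"
    using nn_integral_real_affine[of "\<lambda>s. ennreal (cauchy_density y s) * indicator {..r} s" "-1" 0]
    by simp
  also have "\<dots> = (\<integral>\<^sup>+ s. ennreal (cauchy_density y s) * indicator {-r..} s \<partial>lborel)"
    by (intro nn_integral_cong) (auto simp: cauchy_density_minus split: split_indicator)
  finally show ?thesis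
    by (simp add: nn_integral_cauchy_density_atLeast[OF y] cauchy_cdf_minus)
qed

lemma nn_integral_cauchy_density_shifted_atMost:
  assumes y: "0 < y"
  shows "(\<integral>\<^sup>+ u. ennreal (cauchy_density y (u - t)) * indicator {..x} u \<partial>lborel) = ennreal (cauchy_cdf y (x - t))"
proof -
  have "(\<integral>\<^sup>+ u. ennreal (cauchy_density y (u - t)) * indicator {..x} u \<partial>lborel)
      = (\<integral>\<^sup>+ s. ennreal (cauchy_density y s) * indicator {..x - t} s \<partial>lborel)"
    using nn_integral_real_affine[of "\<lambda>s. ennreal (cauchy_density y s) * indicator {..x - t} s" 1 "- t"]
    by (simp add: indicator_def)
  then show ?thesis by (simp add: nn_integral_cauchy_density_atMost[OF y])
qed

lemma nn_integral_cauchy_density_two_tails: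
  assumes y: "0 < y" and "p \<le> q"
  shows "(\<integral>\<^sup>+ s. ennreal (cauchy_density y s) * indicator (- {p<..<q}) s \<partial>lborel)
    = ennreal (cauchy_cdf y p + (1 - cauchy_cdf y q))"
proof -
  have "(\<integral>\<^sup>+ s. ennreal (cauchy_density y s) * indicator (- {p<..<q}) s \<partial>lborel)
     = (\<integral>\<^sup>+ s. ennreal (cauchy_density y s) * indicator {..p} s
          + ennreal (cauchy_density y s) * indicator {q..} s \<partial>lborel)"
  proof (intro nn_integral_cong_AE)
    show "AE s in lborel. ennreal (cauchy_density y s) * indicator (- {p<..<q}) s
        = ennreal (cauchy_density y s) * indicator {..p} s + ennreal (cauchy_density y s) * indicator {q..} s"
      using AE_lborel_singleton[of p] by eventually_elim (use \<open>p \<le> q\<close> in \<open>auto split: split_indicator\<close>)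
  qed
  also have "\<dots> = ennreal (cauchy_cdf y p) + ennreal (1 - cauchy_cdf y q)"
    by (simp add: nn_integral_add nn_integral_cauchy_density_atMost[OF y] nn_integral_cauchy_density_atLeast[OF y])
  finally show ?thesis
    by (simp add: cauchy_cdf_nonneg cauchy_cdf_le_1 flip: ennreal_plus)
qed

lemma nn_integral_cauchy_density: "0 < y \<Longrightarrow> (\<integral>\<^sup>+ s. ennreal (cauchy_density y s) \<partial>lborel) = 1"
  using nn_integral_cauchy_density_two_tails[of y 0 0] by simp

lemma integrable_cauchy_density: "0 < y \<Longrightarrow> integrable lborel (cauchy_density y)"
  by (intro integrableI_nonneg) (auto simp: nn_integral_cauchy_density cauchy_density_nonneg)

lemma integral_cauchy_density: "0 < y \<Longrightarrow> (\<integral>s. cauchy_density y s \<partial>lborel) = 1"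
  using nn_integral_cauchy_density[of y]
  by (subst integral_eq_nn_integral) (auto simp: cauchy_density_nonneg)

lemma integral_cauchy_density_tails:
  assumes y: "0 < y"
  shows "(\<integral>s. cauchy_density y s * indicator (- {- (sqrt 3 * y)<..<sqrt 3 * y}) s \<partial>lborel) = 1/3"
proof -
  have "arctan (sqrt 3 * y / y) = pi / 3"
    using y arctan_tan[of "pi/3"] tan_60 by simp
  moreover from this have "arctan (- (sqrt 3 * y) / y) = - (pi / 3)"
    by (simp add: arctan_minus)
  ultimately have "cauchy_cdf y (- (sqrt 3 * y)) + (1 - cauchy_cdf y (sqrt 3 * y)) = 1/3"
    unfolding cauchy_cdf_def by simp
  then show ?thesis
    using nn_integral_cauchy_density_two_tails[OF y, of "- (sqrt 3 * y)" "sqrt 3 * y"] y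
    by (subst integral_eq_nn_integral)
       (auto simp: cauchy_density_nonneg ennreal_indicator ennreal_mult' mult.commute)
qed

text \<open>Since \<open>arctan (sqrt 3) = pi / 3\<close>, the tails \<open>\<bar>s\<bar> \<ge> sqrt 3 * y\<close> carry a third of the Cauchy mass,
  so the Cauchy average of \<open>w\<close> is at least \<open>L - (L + D) / 3\<close>.\<close>
lemma cauchy_smoothing_inequality:
  assumes y: "0 < y" and w [measurable]: "w \<in> borel_measurable borel"
    and bounded: "\<And>s. \<bar>w s\<bar> \<le> D" and lower: "\<And>s. \<bar>s\<bar> < sqrt 3 * y \<Longrightarrow> L \<le> w s"
  shows "L \<le> (3 * \<bar>\<integral>s. cauchy_density y s * w s \<partial>lborel\<bar> + D) / 2"
proof -
  let ?tails = "indicator (- {- (sqrt 3 * y)<..<sqrt 3 * y}) :: real \<Rightarrow> real"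
  have int_density: "integrable lborel (cauchy_density y)"
    by (rule integrable_cauchy_density[OF y])
  have int_tails: "integrable lborel (\<lambda>s. cauchy_density y s * ?tails s)"
    by (rule Bochner_Integration.integrable_bound[OF int_density])
       (auto simp: cauchy_density_nonneg[OF y] split: split_indicator)
  have "cauchy_density y s * \<bar>w s\<bar> \<le> cauchy_density y s * \<bar>D\<bar>" for s
    using bounded[of s] by (intro mult_left_mono) (auto simp: cauchy_density_nonneg[OF y])
  then have int_w: "integrable lborel (\<lambda>s. cauchy_density y s * w s)"
    by (intro Bochner_Integration.integrable_bound[OF integrable_mult_left[OF int_density, of D]])
       (auto simp: abs_mult cauchy_density_nonneg[OF y])
  have "L - (L + D) / 3 = (\<integral>s. L * cauchy_density y s - (L + D) * (cauchy_density y s * ?tails s) \<partial>lborel)"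
    using int_density int_tails by (simp add: integral_cauchy_density[OF y] integral_cauchy_density_tails[OF y])
  also have "\<dots> \<le> (\<integral>s. cauchy_density y s * w s \<partial>lborel)"
  proof (rule integral_mono)
    fix s
    have "L * cauchy_density y s \<le> cauchy_density y s * w s" if "\<bar>s\<bar> < sqrt 3 * y"
      using lower[OF that] cauchy_density_nonneg[OF y] by (simp add: mult.commute mult_right_mono)
    moreover have "cauchy_density y s * (- D) \<le> cauchy_density y s * w s"
      using bounded[of s] cauchy_density_nonneg[OF y] by (intro mult_left_mono) auto
    ultimately show "L * cauchy_density y s - (L + D) * (cauchy_density y s * ?tails s) \<le> cauchy_density y s * w s"
      by (auto simp: algebra_simps split: split_indicator)
  qed (use int_density int_tails int_w in auto)
  finally have "L - (L + D) / 3 \<le> \<bar>\<integral>s. cauchy_density y s * w s \<partial>lborel\<bar>"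
    by linarith
  then show ?thesis by (simp add: field_simps)
qed

section \<open>Stieltjes transforms and Cauchy-smoothed distribution functions\<close>

lemma abs_cdf_diff_le_1:
  assumes "real_distribution M" "real_distribution N"
  shows "\<bar>cdf M x - cdf N x\<bar> \<le> 1"
proof -
  interpret M: real_distribution M by fact
  interpret N: real_distribution N by fact
  show ?thesis using M.cdf_nonneg[of x] N.cdf_nonneg[of x] M.cdf_bounded_prob[of x] N.cdf_bounded_prob[of x]
    by linarith
qed

lemma abs_cdf_diff_le_sup:
  assumes "real_distribution M" "real_distribution N"
  shows "\<bar>cdf M x - cdf N x\<bar> \<le> (SUP x. \<bar>cdf M x - cdf N x\<bar>)"
  using abs_cdf_diff_le_1[OF assms] by (intro cSUP_upper bdd_aboveI) auto

lemma sup_abs_cdf_diff_le_1: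
  assumes "real_distribution M" "real_distribution N"
  shows "(SUP x. \<bar>cdf M x - cdf N x\<bar>) \<le> 1"
  using abs_cdf_diff_le_1[OF assms] by (intro cSUP_least) auto

lemma norm_inverse_of_real_minus_le:
  assumes "0 < Im z"
  shows "cmod (1 / (complex_of_real t - z)) \<le> 1 / Im z"
proof -
  have "Im z \<le> cmod (complex_of_real t - z)"
    using abs_Im_le_cmod[of "complex_of_real t - z"] by simp
  then show ?thesis using assms by (simp add: norm_divide frac_le)
qed

lemma (in real_distribution) integrable_stieltjes_kernel:
  assumes "0 < Im z"
  shows "integrable M (\<lambda>t. 1 / (complex_of_real t - z))"
  by (rule integrable_const_bound[where B="1 / Im z"])
     (use norm_inverse_of_real_minus_le[OF assms] in auto)

lemma (in real_distribution) norm_stieltjes_le: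
  assumes "0 < Im z"
  shows "cmod (stieltjes M z) \<le> 1 / Im z"
proof -
  have "cmod (stieltjes M z) \<le> (\<integral>t. cmod (1 / (complex_of_real t - z)) \<partial>M)"
    unfolding stieltjes_def by (rule integral_norm_bound)
  also have "\<dots> \<le> 1 / Im z"
    using integrable_stieltjes_kernel[OF assms] norm_inverse_of_real_minus_le[OF assms]
    by (intro integral_le_const) auto
  finally show ?thesis .
qed

lemma (in real_distribution) borel_measurable_stieltjes:
  fixes f :: "real \<Rightarrow> complex"
  assumes [measurable]: "f \<in> borel_measurable borel"
  shows "(\<lambda>u. stieltjes M (f u)) \<in> borel_measurable borel"
proof -
  have "(\<lambda>(u, t). 1 / (complex_of_real t - f u)) \<in> borel_measurable (lborel \<Otimes>\<^sub>M M)"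
    by measurable
  then have "(\<lambda>u. \<integral>t. 1 / (complex_of_real t - f u) \<partial>M) \<in> borel_measurable lborel"
    by (rule borel_measurable_lebesgue_integral[where f="\<lambda>u t. 1 / (complex_of_real t - f u)"])
  then show ?thesis unfolding stieltjes_def by simp
qed

lemma (in real_distribution) Im_stieltjes:
  assumes "0 < V"
  shows "Im (stieltjes M (Complex u V)) = pi * (\<integral>t. cauchy_density V (u - t) \<partial>M)"
proof -
  have "Im (stieltjes M (Complex u V)) = (\<integral>t. Im (1 / (complex_of_real t - Complex u V)) \<partial>M)"
    unfolding stieltjes_def using integrable_stieltjes_kernel[of "Complex u V"] assms by simp
  also have "\<dots> = (\<integral>t. pi * cauchy_density V (u - t) \<partial>M)"
    using assms by (intro Bochner_Integration.integral_cong)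
      (simp_all add: Im_divide pi_mult_cauchy_density power2_commute[of u])
  finally show ?thesis by simp
qed

lemma cauchy_cdf_diff_eq_integral:
  assumes y: "0 < y" and yV: "y \<le> V"
  shows "cauchy_cdf V r - cauchy_cdf y r = (\<integral>u. - (r / (r\<^sup>2 + u\<^sup>2)) * indicator {y..V} u \<partial>lborel) / pi"
proof -
  have "((\<lambda>u. arctan (r / u)) has_real_derivative - (r / (r\<^sup>2 + u\<^sup>2))) (at u)"
    and "isCont (\<lambda>u. - (r / (r\<^sup>2 + u\<^sup>2))) u" if "y \<le> u" for u
  proof -
    have "0 < u" "0 < r\<^sup>2 + u\<^sup>2" using that y by (auto simp: sum_squares_pos)
    then show "((\<lambda>u. arctan (r / u)) has_real_derivative - (r / (r\<^sup>2 + u\<^sup>2))) (at u)"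
      and "isCont (\<lambda>u. - (r / (r\<^sup>2 + u\<^sup>2))) u"
      by (auto intro!: derivative_eq_intros continuous_intros simp: field_simps power2_eq_square)
  qed
  then have "(\<integral>u. - (r / (r\<^sup>2 + u\<^sup>2)) * indicator {y..V} u \<partial>lborel) = arctan (r / V) - arctan (r / y)"
    by (intro integral_FTC_Icc_real[OF yV]) auto
  then show ?thesis unfolding cauchy_cdf_def by (simp add: diff_divide_distrib)
qed

definition cauchy_smoothed_cdf :: "real measure \<Rightarrow> real \<Rightarrow> real \<Rightarrow> real" where
  "cauchy_smoothed_cdf M y x = (\<integral>t. cauchy_cdf y (x - t) \<partial>M)"

context real_distribution
begin

lemma pair_sigma_finite_lborel: "pair_sigma_finite M lborel"
  by (simp add: pair_sigma_finite_def sigma_finite_measure_axioms lborel.sigma_finite_measure_axioms)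

lemma borel_measurable_cdf [measurable]: "cdf M \<in> borel_measurable borel"
  by (rule borel_measurable_mono) (simp add: mono_def cdf_nondecreasing)

lemma integrable_cauchy_cdf: "integrable M (\<lambda>t. cauchy_cdf y (x - t))"
  by (rule integrable_const_bound[where B=1]) (auto simp: cauchy_cdf_nonneg cauchy_cdf_le_1)

lemma cauchy_smoothed_cdf_nonneg: "0 \<le> cauchy_smoothed_cdf M y x"
  unfolding cauchy_smoothed_cdf_def by (simp add: cauchy_cdf_nonneg)

lemma cauchy_smoothed_cdf_nn_integral:
  "ennreal (cauchy_smoothed_cdf M y x) = (\<integral>\<^sup>+ t. ennreal (cauchy_cdf y (x - t)) \<partial>M)"
  unfolding cauchy_smoothed_cdf_def
  by (rule nn_integral_eq_integral[symmetric]) (auto simp: integrable_cauchy_cdf cauchy_cdf_nonneg)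

lemma cauchy_smoothed_cdf_eq_convolution:
  assumes y: "0 < y"
  shows "cauchy_smoothed_cdf M y x = (\<integral>s. cauchy_density y s * cdf M (x - s) \<partial>lborel)"
proof -
  interpret P: pair_sigma_finite M lborel by (rule pair_sigma_finite_lborel)
  have "(\<integral>\<^sup>+ t. ennreal (cauchy_cdf y (x - t)) \<partial>M)
      = (\<integral>\<^sup>+ t. (\<integral>\<^sup>+ s. ennreal (cauchy_density y s) * indicator {..x} (t + s) \<partial>lborel) \<partial>M)"
    by (intro nn_integral_cong)
       (auto simp: nn_integral_cauchy_density_atMost[OF y, symmetric] intro!: nn_integral_cong split: split_indicator)
  also have "\<dots> = (\<integral>\<^sup>+ s. (\<integral>\<^sup>+ t. ennreal (cauchy_density y s) * indicator {..x} (t + s) \<partial>M) \<partial>lborel)"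
    by (rule P.Fubini'[symmetric]) measurable
  also have "\<dots> = (\<integral>\<^sup>+ s. ennreal (cauchy_density y s) * emeasure M {..x - s} \<partial>lborel)"
    by (intro nn_integral_cong, subst nn_integral_cmult_indicator[symmetric])
       (auto intro!: nn_integral_cong split: split_indicator)
  also have "\<dots> = (\<integral>\<^sup>+ s. ennreal (cauchy_density y s * cdf M (x - s)) \<partial>lborel)"
    by (intro nn_integral_cong)
       (simp add: emeasure_eq_measure cdf_def ennreal_mult cauchy_density_nonneg[OF y])
  finally have "has_bochner_integral lborel (\<lambda>s. cauchy_density y s * cdf M (x - s)) (cauchy_smoothed_cdf M y x)"
    by (intro has_bochner_integral_nn_integral)
       (auto simp: cauchy_smoothed_cdf_nn_integral cauchy_smoothed_cdf_nonneg cauchy_density_nonneg[OF y] cdf_nonneg)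
  then show ?thesis by (simp add: has_bochner_integral_iff)
qed

lemma cauchy_smoothed_cdf_eq_integral_Im_stieltjes:
  assumes V: "0 < V"
  shows "integrable lborel (\<lambda>u. Im (stieltjes M (Complex u V)) / pi * indicator {..x} u)"
    and "cauchy_smoothed_cdf M V x = (\<integral>u. Im (stieltjes M (Complex u V)) / pi * indicator {..x} u \<partial>lborel)"
proof -
  interpret P: pair_sigma_finite M lborel by (rule pair_sigma_finite_lborel)
  have Im_eq: "Im (stieltjes M (Complex u V)) / pi = (\<integral>t. cauchy_density V (u - t) \<partial>M)" for u
    using Im_stieltjes[OF V] by simp
  have int_density: "integrable M (\<lambda>t. cauchy_density V (u - t))" for u
    by (rule integrable_const_bound[where B="1/(pi*V)"])
       (auto simp: cauchy_density_le[OF V] cauchy_density_nonneg[OF V])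
  have nonneg: "0 \<le> Im (stieltjes M (Complex u V)) / pi * indicator {..x} u" for u
    unfolding Im_eq by (auto intro!: Bochner_Integration.integral_nonneg simp: cauchy_density_nonneg[OF V])
  have "(\<integral>\<^sup>+ t. ennreal (cauchy_cdf V (x - t)) \<partial>M)
      = (\<integral>\<^sup>+ t. (\<integral>\<^sup>+ u. ennreal (cauchy_density V (u - t)) * indicator {..x} u \<partial>lborel) \<partial>M)"
    by (simp add: nn_integral_cauchy_density_shifted_atMost[OF V])
  also have "\<dots> = (\<integral>\<^sup>+ u. (\<integral>\<^sup>+ t. ennreal (cauchy_density V (u - t)) * indicator {..x} u \<partial>M) \<partial>lborel)"
    by (rule P.Fubini'[symmetric]) measurable
  also have "\<dots> = (\<integral>\<^sup>+ u. ennreal (Im (stieltjes M (Complex u V)) / pi * indicator {..x} u) \<partial>lborel)"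
    unfolding Im_eq
    by (intro nn_integral_cong)
       (simp add: nn_integral_multc nn_integral_eq_integral[OF int_density] cauchy_density_nonneg[OF V]
         ennreal_mult' split: split_indicator)
  finally have "has_bochner_integral lborel (\<lambda>u. Im (stieltjes M (Complex u V)) / pi * indicator {..x} u)
      (cauchy_smoothed_cdf M V x)"
    using borel_measurable_stieltjes[of "\<lambda>u. Complex u V"] nonneg
    by (intro has_bochner_integral_nn_integral)
       (auto simp: cauchy_smoothed_cdf_nn_integral cauchy_smoothed_cdf_nonneg Complex_eq)
  then show "integrable lborel (\<lambda>u. Im (stieltjes M (Complex u V)) / pi * indicator {..x} u)"
    and "cauchy_smoothed_cdf M V x = (\<integral>u. Im (stieltjes M (Complex u V)) / pi * indicator {..x} u \<partial>lborel)"
    unfolding has_bochner_integral_iff by auto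
qed

lemma integrable_Re_stieltjes_vertical:
  assumes y: "0 < y"
  shows "integrable lborel (\<lambda>u. Re (stieltjes M (Complex x u)) * indicator {y..V} u)"
proof (rule Bochner_Integration.integrable_bound)
  show "integrable lborel (\<lambda>u. indicator {y..V} u / y :: real)"
    by (auto intro!: integrable_divide integrable_real_indicator simp: emeasure_lborel_Icc_eq)
  show "(\<lambda>u. Re (stieltjes M (Complex x u)) * indicator {y..V} u) \<in> borel_measurable lborel"
    using borel_measurable_stieltjes[of "\<lambda>u. Complex x u"] by (simp add: Complex_eq)
  have "\<bar>Re (stieltjes M (Complex x u))\<bar> \<le> 1 / y" if "y \<le> u" for u
    using abs_Re_le_cmod[of "stieltjes M (Complex x u)"] norm_stieltjes_le[of "Complex x u"]
      frac_le[of 1 1 y u] that y by simp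
  then show "AE u in lborel. norm (Re (stieltjes M (Complex x u)) * indicator {y..V} u)
      \<le> norm (indicator {y..V} u / y :: real)"
    using y by (auto intro!: AE_I2 split: split_indicator)
qed

lemma integrable_Re_stieltjes_kernel_vertical:
  assumes y: "0 < y" and yV: "y \<le> V"
  shows "integrable (M \<Otimes>\<^sub>M lborel) (\<lambda>(t, u). Re (1 / (complex_of_real t - Complex x u)) * indicator {y..V} u)"
    (is "integrable _ (\<lambda>(t, u). ?k t u)")
proof (rule pair_sigma_finite.Fubini_integrable[OF pair_sigma_finite_lborel])
  show meas: "(\<lambda>(t, u). ?k t u) \<in> borel_measurable (M \<Otimes>\<^sub>M lborel)"
    unfolding Complex_eq by measurable
  have bound: "\<bar>?k t u\<bar> \<le> indicator {y..V} u / y" for t u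
  proof (cases "u \<in> {y..V}")
    case True
    then have "\<bar>?k t u\<bar> \<le> 1 / u"
      using y abs_Re_le_cmod norm_inverse_of_real_minus_le[of "Complex x u" t] by (auto intro: order_trans)
    also have "\<dots> \<le> 1 / y" using True y by (simp add: frac_le)
    finally show ?thesis using True by simp
  qed simp
  have int_indicator: "integrable lborel (\<lambda>u. indicator {y..V} u / y :: real)"
    by (auto intro!: integrable_divide integrable_real_indicator simp: emeasure_lborel_Icc_eq)
  have "(\<lambda>u. ?k t u) \<in> borel_measurable borel" for t
    unfolding Complex_eq by measurable
  then have "integrable lborel (?k t)" for t
    using y bound by (intro Bochner_Integration.integrable_bound[OF int_indicator]) auto
  moreover have "(\<integral>u. norm (?k t u) \<partial>lborel) \<le> (V - y) / y" for t
  proof -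
    have "(\<integral>u. norm (?k t u) \<partial>lborel) \<le> (\<integral>u. indicator {y..V} u / y \<partial>lborel)"
      using \<open>integrable lborel (?k t)\<close> int_indicator bound by (intro integral_mono) auto
    also have "\<dots> = (V - y) / y" using yV by simp
    finally show ?thesis .
  qed
  moreover have "(\<lambda>t. \<integral>u. norm (?k t u) \<partial>lborel) \<in> borel_measurable M"
    using meas by (intro lborel.borel_measurable_lebesgue_integral[where f="\<lambda>t u. norm (?k t u)"]) simp
  ultimately show "AE t in M. integrable lborel (\<lambda>u. case (t, u) of (t, u) \<Rightarrow> ?k t u)"
    and "integrable M (\<lambda>t. \<integral>u. norm (case (t, u) of (t, u) \<Rightarrow> ?k t u) \<partial>lborel)"
    by (auto intro!: integrable_const_bound[where B="(V - y) / y"])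
qed

lemma cauchy_smoothed_cdf_diff_eq_integral_Re_stieltjes:
  assumes y: "0 < y" and yV: "y \<le> V"
  shows "cauchy_smoothed_cdf M V x - cauchy_smoothed_cdf M y x
    = (\<integral>u. Re (stieltjes M (Complex x u)) * indicator {y..V} u \<partial>lborel) / pi"
proof -
  interpret P: pair_sigma_finite M lborel by (rule pair_sigma_finite_lborel)
  define k where "k t u = Re (1 / (complex_of_real t - Complex x u)) * indicator {y..V} u" for t u
  have inner_M: "(\<integral>t. k t u \<partial>M) = Re (stieltjes M (Complex x u)) * indicator {y..V} u" for u
    using integrable_stieltjes_kernel[of "Complex x u"] y
    by (cases "u \<in> {y..V}") (auto simp: k_def stieltjes_def)
  have inner_lborel: "(\<integral>u. k t u \<partial>lborel) = pi * (cauchy_cdf V (x - t) - cauchy_cdf y (x - t))" for t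
    unfolding cauchy_cdf_diff_eq_integral[OF y yV] k_def
    by (simp add: Re_divide power2_eq_square algebra_simps minus_divide_left)
  have "cauchy_smoothed_cdf M V x - cauchy_smoothed_cdf M y x = (\<integral>t. (\<integral>u. k t u \<partial>lborel) \<partial>M) / pi"
    by (simp add: inner_lborel cauchy_smoothed_cdf_def integrable_cauchy_cdf)
  also have "(\<integral>t. (\<integral>u. k t u \<partial>lborel) \<partial>M) = (\<integral>u. (\<integral>t. k t u \<partial>M) \<partial>lborel)"
    unfolding k_def by (rule P.Fubini_integral[symmetric, OF integrable_Re_stieltjes_kernel_vertical[OF y yV]])
  finally show ?thesis by (simp add: inner_M)
qed

end

lemma cauchy_smoothed_cdf_diff_horizontal_le:
  assumes M: "real_distribution M" and N: "real_distribution N" and V: "0 < V"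
  shows "ennreal \<bar>cauchy_smoothed_cdf M V x - cauchy_smoothed_cdf N V x\<bar>
    \<le> ennreal (1 / pi) * (\<integral>\<^sup>+ u. ennreal (cmod (stieltjes M (Complex u V) - stieltjes N (Complex u V))) \<partial>lborel)"
proof -
  interpret M: real_distribution M by fact
  interpret N: real_distribution N by fact
  let ?dS = "\<lambda>u. stieltjes M (Complex u V) - stieltjes N (Complex u V)"
  have eq: "cauchy_smoothed_cdf M V x - cauchy_smoothed_cdf N V x = (\<integral>u. Im (?dS u) / pi * indicator {..x} u \<partial>lborel)"
    and int: "integrable lborel (\<lambda>u. Im (?dS u) / pi * indicator {..x} u)"
    using M.cauchy_smoothed_cdf_eq_integral_Im_stieltjes[OF V, of x]
      N.cauchy_smoothed_cdf_eq_integral_Im_stieltjes[OF V, of x]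
    by (simp_all add: diff_divide_distrib left_diff_distrib)
  have meas: "(\<lambda>u. cmod (?dS u)) \<in> borel_measurable lborel"
    using M.borel_measurable_stieltjes[of "\<lambda>u. Complex u V"] N.borel_measurable_stieltjes[of "\<lambda>u. Complex u V"]
    by (simp add: Complex_eq)
  have bound: "\<bar>Im (?dS u) / pi * indicator {..x} u\<bar> \<le> 1 / pi * cmod (?dS u)" for u
    using abs_Im_le_cmod[of "?dS u"] by (auto simp: abs_mult divide_right_mono split: split_indicator)
  show ?thesis unfolding eq by (rule ennreal_abs_integral_le[OF int meas _ bound]) simp
qed

lemma cauchy_smoothed_cdf_diff_vertical_le:
  assumes M: "real_distribution M" and N: "real_distribution N" and y: "0 < y" and yV: "y \<le> V"
  shows "ennreal \<bar>(cauchy_smoothed_cdf M V x - cauchy_smoothed_cdf M y x)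
      - (cauchy_smoothed_cdf N V x - cauchy_smoothed_cdf N y x)\<bar>
    \<le> ennreal (1 / pi) * (\<integral>\<^sup>+ u. ennreal (cmod (stieltjes M (Complex x u) - stieltjes N (Complex x u)))
        * indicator {y..V} u \<partial>lborel)"
proof -
  interpret M: real_distribution M by fact
  interpret N: real_distribution N by fact
  let ?dS = "\<lambda>u. stieltjes M (Complex x u) - stieltjes N (Complex x u)"
  have eq: "(cauchy_smoothed_cdf M V x - cauchy_smoothed_cdf M y x) - (cauchy_smoothed_cdf N V x - cauchy_smoothed_cdf N y x)
      = (\<integral>u. Re (?dS u) * indicator {y..V} u / pi \<partial>lborel)"
    and int: "integrable lborel (\<lambda>u. Re (?dS u) * indicator {y..V} u / pi)"
    unfolding M.cauchy_smoothed_cdf_diff_eq_integral_Re_stieltjes[OF y yV]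
      N.cauchy_smoothed_cdf_diff_eq_integral_Re_stieltjes[OF y yV]
    using M.integrable_Re_stieltjes_vertical[OF y] N.integrable_Re_stieltjes_vertical[OF y]
    by (simp_all add: diff_divide_distrib left_diff_distrib)
  have meas: "(\<lambda>u. cmod (?dS u) * indicator {y..V} u) \<in> borel_measurable lborel"
    using M.borel_measurable_stieltjes[of "\<lambda>u. Complex x u"] N.borel_measurable_stieltjes[of "\<lambda>u. Complex x u"]
    by (simp add: Complex_eq)
  have bound: "\<bar>Re (?dS u) * indicator {y..V} u / pi\<bar> \<le> 1 / pi * (cmod (?dS u) * indicator {y..V} u)" for u
    using abs_Re_le_cmod[of "?dS u"] by (auto simp: abs_mult divide_right_mono split: split_indicator)
  have "ennreal \<bar>\<integral>u. Re (?dS u) * indicator {y..V} u / pi \<partial>lborel\<bar>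
      \<le> ennreal (1 / pi) * (\<integral>\<^sup>+ u. ennreal (cmod (?dS u) * indicator {y..V} u) \<partial>lborel)"
    by (rule ennreal_abs_integral_le[OF int meas _ bound]) simp
  then show ?thesis unfolding eq by (simp add: ennreal_mult' ennreal_indicator)
qed

text \<open>Contour argument: the smoothed difference at height \<open>y\<close> is the one at height \<open>V\<close>,
  a horizontal integral of \<open>Im (S\<^sub>M - S\<^sub>N)\<close>, minus a vertical integral of \<open>Re (S\<^sub>M - S\<^sub>N)\<close>
  over \<open>[y, V]\<close>.\<close>
lemma cauchy_smoothed_cdf_diff_le_stieltjes:
  assumes M: "real_distribution M" and N: "real_distribution N" and y: "0 < y" and yV: "y \<le> V"
  shows "ennreal \<bar>cauchy_smoothed_cdf M y x - cauchy_smoothed_cdf N y x\<bar>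
    \<le> ennreal (1 / pi) * ((\<integral>\<^sup>+ u. ennreal (cmod (stieltjes M (Complex u V) - stieltjes N (Complex u V))) \<partial>lborel)
       + (\<integral>\<^sup>+ u. ennreal (cmod (stieltjes M (Complex x u) - stieltjes N (Complex x u))) * indicator {y..V} u \<partial>lborel))"
proof -
  let ?h = "cauchy_smoothed_cdf M V x - cauchy_smoothed_cdf N V x"
  let ?v = "(cauchy_smoothed_cdf M V x - cauchy_smoothed_cdf M y x) - (cauchy_smoothed_cdf N V x - cauchy_smoothed_cdf N y x)"
  have "\<bar>cauchy_smoothed_cdf M y x - cauchy_smoothed_cdf N y x\<bar> \<le> \<bar>?h\<bar> + \<bar>?v\<bar>"
    using abs_triangle_ineq4[of ?h ?v] by simp
  then have "ennreal \<bar>cauchy_smoothed_cdf M y x - cauchy_smoothed_cdf N y x\<bar> \<le> ennreal (\<bar>?h\<bar> + \<bar>?v\<bar>)"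
    by (rule ennreal_leI)
  also have "\<dots> = ennreal \<bar>?h\<bar> + ennreal \<bar>?v\<bar>" by (rule ennreal_plus) auto
  also have "\<dots> \<le> ennreal (1 / pi) * (\<integral>\<^sup>+ u. ennreal (cmod (stieltjes M (Complex u V) - stieltjes N (Complex u V))) \<partial>lborel)
      + ennreal (1 / pi) * (\<integral>\<^sup>+ u. ennreal (cmod (stieltjes M (Complex x u) - stieltjes N (Complex x u))) * indicator {y..V} u \<partial>lborel)"
    using y yV by (intro add_mono cauchy_smoothed_cdf_diff_horizontal_le cauchy_smoothed_cdf_diff_vertical_le M N) auto
  finally show ?thesis by (simp add: distrib_left)
qed

lemma cauchy_smoothed_cdf_diff_eq_convolution:
  assumes M: "real_distribution M" and N: "real_distribution N" and y: "0 < y"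
  shows "cauchy_smoothed_cdf M y x - cauchy_smoothed_cdf N y x
    = (\<integral>s. cauchy_density y s * (cdf M (x - s) - cdf N (x - s)) \<partial>lborel)"
proof -
  have "integrable lborel (\<lambda>s. cauchy_density y s * cdf K (x - s))" if "real_distribution K" for K
  proof (rule Bochner_Integration.integrable_bound[OF integrable_cauchy_density[OF y]])
    interpret K: real_distribution K by fact
    show "(\<lambda>s. cauchy_density y s * cdf K (x - s)) \<in> borel_measurable lborel"
      by measurable
    show "AE s in lborel. norm (cauchy_density y s * cdf K (x - s)) \<le> norm (cauchy_density y s)"
      using cauchy_density_nonneg[OF y] K.cdf_nonneg K.cdf_bounded_prob
      by (auto intro!: AE_I2 simp: abs_mult intro: mult_left_le)
  qed
  then show ?thesis
    using M N by (simp add: real_distribution.cauchy_smoothed_cdf_eq_convolution[OF _ y] right_diff_distrib)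
qed

lemma cdf_diff_upper_via_smoothing:
  assumes M: "real_distribution M" and N: "real_distribution N" and y: "0 < y"
    and D: "\<And>x. \<bar>cdf M x - cdf N x\<bar> \<le> D" and x1: "x0 + sqrt 3 * y \<le> x1"
  shows "cdf M x0 - cdf N x0 \<le> (cdf N (x1 + sqrt 3 * y) - cdf N x0)
    + (3 * \<bar>cauchy_smoothed_cdf M y x1 - cauchy_smoothed_cdf N y x1\<bar> + D) / 2"
proof -
  interpret M: real_distribution M by fact
  interpret N: real_distribution N by fact
  have "cdf M x0 - cdf N (x1 + sqrt 3 * y)
      \<le> (3 * \<bar>\<integral>s. cauchy_density y s * (cdf M (x1 - s) - cdf N (x1 - s)) \<partial>lborel\<bar> + D) / 2"
  proof (rule cauchy_smoothing_inequality[OF y])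
    fix s assume "\<bar>s\<bar> < sqrt 3 * y"
    then have "cdf M x0 \<le> cdf M (x1 - s)" and "cdf N (x1 - s) \<le> cdf N (x1 + sqrt 3 * y)"
      using x1 by (auto intro!: M.cdf_nondecreasing N.cdf_nondecreasing)
    then show "cdf M x0 - cdf N (x1 + sqrt 3 * y) \<le> cdf M (x1 - s) - cdf N (x1 - s)" by simp
  qed (auto simp: D)
  then show ?thesis unfolding cauchy_smoothed_cdf_diff_eq_convolution[OF M N y] by linarith
qed

lemma cdf_diff_lower_via_smoothing:
  assumes M: "real_distribution M" and N: "real_distribution N" and y: "0 < y"
    and D: "\<And>x. \<bar>cdf M x - cdf N x\<bar> \<le> D" and x1: "x1 + sqrt 3 * y \<le> x0"
  shows "cdf N x0 - cdf M x0 \<le> (cdf N x0 - cdf N (x1 - sqrt 3 * y))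
    + (3 * \<bar>cauchy_smoothed_cdf M y x1 - cauchy_smoothed_cdf N y x1\<bar> + D) / 2"
proof -
  interpret M: real_distribution M by fact
  interpret N: real_distribution N by fact
  have "cdf N (x1 - sqrt 3 * y) - cdf M x0
      \<le> (3 * \<bar>\<integral>s. cauchy_density y s * (cdf N (x1 - s) - cdf M (x1 - s)) \<partial>lborel\<bar> + D) / 2"
  proof (rule cauchy_smoothing_inequality[OF y])
    fix s assume "\<bar>s\<bar> < sqrt 3 * y"
    then have "cdf M (x1 - s) \<le> cdf M x0" and "cdf N (x1 - sqrt 3 * y) \<le> cdf N (x1 - s)"
      using x1 by (auto intro!: M.cdf_nondecreasing N.cdf_nondecreasing)
    then show "cdf N (x1 - sqrt 3 * y) - cdf M x0 \<le> cdf N (x1 - s) - cdf M (x1 - s)" by simp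
  qed (auto simp: D abs_minus_commute)
  then show ?thesis
    unfolding cauchy_smoothed_cdf_diff_eq_convolution[OF N M y, symmetric] abs_minus_commute[of "cauchy_smoothed_cdf N y x1"]
    by linarith
qed

section \<open>Geometry of a union of disjoint intervals\<close>

lemma gam_le: "\<alpha> < m \<Longrightarrow> gam m a b x \<le> min \<bar>x - a \<alpha>\<bar> \<bar>b \<alpha> - x\<bar>"
  unfolding gam_def by (rule Min_le) auto

lemma gam_ge: "0 < m \<Longrightarrow> (\<And>\<alpha>. \<alpha> < m \<Longrightarrow> r \<le> min \<bar>x - a \<alpha>\<bar> \<bar>b \<alpha> - x\<bar>) \<Longrightarrow> r \<le> gam m a b x"
  unfolding gam_def by (subst Min_ge_iff) auto

lemma gam_attained: "0 < m \<Longrightarrow> \<exists>\<alpha><m. gam m a b x = min \<bar>x - a \<alpha>\<bar> \<bar>b \<alpha> - x\<bar>"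
proof -
  assume "0 < m"
  then have "gam m a b x \<in> (\<lambda>\<alpha>. min \<bar>x - a \<alpha>\<bar> \<bar>b \<alpha> - x\<bar>) ` {..<m}"
    unfolding gam_def by (intro Min_in) auto
  then show ?thesis by auto
qed

lemma gam_nonneg: "0 < m \<Longrightarrow> 0 \<le> gam m a b x"
  by (rule gam_ge) auto

lemma gam_lipschitz:
  assumes "0 < m"
  shows "gam m a b t \<le> gam m a b s + \<bar>t - s\<bar>"
proof -
  obtain \<alpha> where "\<alpha> < m" and \<alpha>: "gam m a b s = min \<bar>s - a \<alpha>\<bar> \<bar>b \<alpha> - s\<bar>"
    using gam_attained[OF assms] by blast
  have "gam m a b t \<le> min \<bar>t - a \<alpha>\<bar> \<bar>b \<alpha> - t\<bar>" by (rule gam_le[OF \<open>\<alpha> < m\<close>])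
  also have "\<dots> \<le> min \<bar>s - a \<alpha>\<bar> \<bar>b \<alpha> - s\<bar> + \<bar>t - s\<bar>" by (simp add: min_def abs_if)
  finally show ?thesis using \<alpha> by simp
qed

lemma gam_reflect: "gam m (\<lambda>\<alpha>. - b \<alpha>) (\<lambda>\<alpha>. - a \<alpha>) x = gam m a b (- x)"
  unfolding gam_def
  by (rule arg_cong[where f=Min], rule image_cong) (auto simp: min.commute abs_minus_commute algebra_simps)

lemma suppJ_reflect: "x \<in> suppJ m (\<lambda>\<alpha>. - b \<alpha>) (\<lambda>\<alpha>. - a \<alpha>) \<longleftrightarrow> - x \<in> suppJ m a b"
  unfolding suppJ_def by (auto simp: minus_le_iff le_minus_iff)

lemma Jprime_reflect: "x \<in> Jprime m (\<lambda>\<alpha>. - b \<alpha>) (\<lambda>\<alpha>. - a \<alpha>) e \<longleftrightarrow> - x \<in> Jprime m a b e"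
  unfolding Jprime_def Jeps_def gam_reflect by (auto simp: minus_le_iff le_minus_iff)

lemma Jprime_memI: "\<beta> < m \<Longrightarrow> x \<in> {a \<beta>..b \<beta>} \<Longrightarrow> e / 2 \<le> gam m a b x \<Longrightarrow> x \<in> Jprime m a b e"
  unfolding Jprime_def Jeps_def by auto

lemma Jprime_gam_ge: "x \<in> Jprime m a b e \<Longrightarrow> e / 2 \<le> gam m a b x"
  unfolding Jprime_def Jeps_def by auto

locale disjoint_intervals =
  fixes m :: nat and a b :: "nat \<Rightarrow> real"
  assumes m_pos: "0 < m"
    and intervals: "\<forall>\<alpha><m. a \<alpha> < b \<alpha>"
    and disjoint: "\<forall>\<alpha><m. \<forall>\<beta><m. \<alpha> \<noteq> \<beta> \<longrightarrow> b \<alpha> < a \<beta> \<or> b \<beta> < a \<alpha>"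
begin

lemma reflect: "disjoint_intervals m (\<lambda>\<alpha>. - b \<alpha>) (\<lambda>\<alpha>. - a \<alpha>)"
proof
  show "0 < m" "\<forall>\<alpha><m. - b \<alpha> < - a \<alpha>" using m_pos intervals by auto
  show "\<forall>\<alpha><m. \<forall>\<beta><m. \<alpha> \<noteq> \<beta> \<longrightarrow> - a \<alpha> < - b \<beta> \<or> - a \<beta> < - b \<alpha>"
  proof (intro allI impI)
    fix \<alpha> \<beta> assume "\<alpha> < m" "\<beta> < m" "\<alpha> \<noteq> \<beta>"
    then have "b \<beta> < a \<alpha> \<or> b \<alpha> < a \<beta>" using disjoint by blast
    then show "- a \<alpha> < - b \<beta> \<or> - a \<beta> < - b \<alpha>" by auto
  qed
qed

lemma gam_eq_on_interval:
  assumes \<alpha>: "\<alpha> < m" and x: "x \<in> {a \<alpha>..b \<alpha>}"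
  shows "gam m a b x = min (x - a \<alpha>) (b \<alpha> - x)"
proof (rule antisym)
  show "gam m a b x \<le> min (x - a \<alpha>) (b \<alpha> - x)" using gam_le[OF \<alpha>, of a b x] x by simp
  show "min (x - a \<alpha>) (b \<alpha> - x) \<le> gam m a b x"
  proof (rule gam_ge[OF m_pos])
    fix \<beta> assume \<beta>: "\<beta> < m"
    show "min (x - a \<alpha>) (b \<alpha> - x) \<le> min \<bar>x - a \<beta>\<bar> \<bar>b \<beta> - x\<bar>"
    proof (cases "\<beta> = \<alpha>")
      case False
      then have "b \<alpha> < a \<beta> \<or> b \<beta> < a \<alpha>" and "a \<beta> < b \<beta>" using disjoint intervals \<alpha> \<beta> by auto
      then show ?thesis using x by (auto simp: min_def abs_if)
    qed (use x in simp)
  qed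
qed

lemma shift_within_interval:
  assumes \<alpha>: "\<alpha> < m" and x0: "x0 \<in> {a \<alpha>..b \<alpha>}" and x1: "\<bar>x1 - x0\<bar> \<le> gam m a b x0 / 2"
  shows "x1 \<in> {a \<alpha>..b \<alpha>}" and "gam m a b x0 / 2 \<le> gam m a b x1"
proof -
  show "x1 \<in> {a \<alpha>..b \<alpha>}"
    using x1 x0 unfolding gam_eq_on_interval[OF \<alpha> x0] abs_le_iff by auto
  show "gam m a b x0 / 2 \<le> gam m a b x1"
    using gam_lipschitz[OF m_pos, of a b x0 x1] x1 by (simp add: abs_minus_commute)
qed

lemma exists_lower_bound_lengths: "\<exists>e>0. \<forall>\<alpha><m. e \<le> b \<alpha> - a \<alpha>"
proof -
  let ?lengths = "(\<lambda>\<alpha>. b \<alpha> - a \<alpha>) ` {..<m}"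
  have "Min ?lengths \<in> ?lengths" using m_pos by (intro Min_in) auto
  then show ?thesis using intervals by (intro exI[of _ "Min ?lengths"]) auto
qed

lemma support_ends_soon:
  assumes \<epsilon>: "0 < \<epsilon>" and not_bulk: "\<forall>\<alpha><m. x0 \<in> {a \<alpha>..b \<alpha>} \<longrightarrow> gam m a b x0 < 2 * \<epsilon>"
    and \<zeta>: "\<zeta> < m" "a \<zeta> + 2 * \<epsilon> < x0" and t: "t \<in> {x0..b \<zeta>}"
  shows "t \<le> x0 + 2 * \<epsilon> \<and> gam m a b t \<le> 2 * \<epsilon>"
proof -
  have x0_\<zeta>: "x0 \<in> {a \<zeta>..b \<zeta>}" using \<zeta> t \<epsilon> by auto
  then have "min (x0 - a \<zeta>) (b \<zeta> - x0) < 2 * \<epsilon>"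
    using not_bulk \<zeta>(1) gam_eq_on_interval[OF \<zeta>(1) x0_\<zeta>] by simp
  then have "b \<zeta> - x0 < 2 * \<epsilon>" using \<zeta> by linarith
  moreover have "gam m a b t \<le> \<bar>b \<zeta> - t\<bar>" using gam_le[OF \<zeta>(1), of a b t] by simp
  ultimately show ?thesis using t by simp
qed

lemma first_interval_cover:
  assumes \<epsilon>: "0 < \<epsilon>" and long: "\<forall>\<alpha><m. 10 * \<epsilon> \<le> b \<alpha> - a \<alpha>"
    and not_bulk: "\<forall>\<alpha><m. x0 \<in> {a \<alpha>..b \<alpha>} \<longrightarrow> gam m a b x0 < 2 * \<epsilon>"
    and \<beta>: "\<beta> < m" and first: "\<And>\<zeta>. \<zeta> < m \<Longrightarrow> x0 \<le> a \<zeta> + 2 * \<epsilon> \<Longrightarrow> a \<beta> \<le> a \<zeta>"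
    and t: "t \<in> suppJ m a b" "x0 \<le> t" "t \<le> a \<beta> + 4 * \<epsilon>"
  shows "gam m a b t \<le> 4 * \<epsilon> \<and> (t \<le> x0 + 2 * \<epsilon> \<or> a \<beta> \<le> t)"
proof -
  obtain \<zeta> where \<zeta>: "\<zeta> < m" "t \<in> {a \<zeta>..b \<zeta>}" using t unfolding suppJ_def by auto
  show ?thesis
  proof (cases "\<zeta> = \<beta>")
    case True
    have "gam m a b t \<le> \<bar>t - a \<beta>\<bar>" using gam_le[OF \<beta>, of a b t] by simp
    then show ?thesis using True \<zeta> t by auto
  next
    case False
    then have "b \<zeta> < a \<beta> \<or> b \<beta> < a \<zeta>" using disjoint \<zeta>(1) \<beta> by blast
    then have "b \<zeta> < a \<beta>" using \<zeta> t long \<beta> \<epsilon> by force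
    then have "a \<zeta> + 2 * \<epsilon> < x0" using first[OF \<zeta>(1)] \<zeta>(2) by fastforce
    then have "t \<le> x0 + 2 * \<epsilon> \<and> gam m a b t \<le> 2 * \<epsilon>"
      using support_ends_soon[OF \<epsilon> not_bulk \<zeta>(1)] \<zeta> t by auto
    then show ?thesis using \<epsilon> by auto
  qed
qed

text \<open>For a point \<open>x0\<close> that is not \<open>2 \<epsilon>\<close> deep inside the support, the support to its right
  either ends within \<open>2 \<epsilon>\<close>, or the first interval starting after \<open>x0 - 2 \<epsilon>\<close> contains a point
  \<open>x1\<close> of \<open>J'\<^sub>\<epsilon>\<close> such that the support between \<open>x0\<close> and \<open>x1 + \<epsilon>\<close> lies within \<open>4 \<epsilon>\<close> of
  an endpoint and inside two intervals of total length \<open>6 \<epsilon>\<close>.\<close>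
lemma near_edge_right_cases:
  assumes \<epsilon>: "0 < \<epsilon>" and long: "\<forall>\<alpha><m. 10 * \<epsilon> \<le> b \<alpha> - a \<alpha>"
    and not_bulk: "\<forall>\<alpha><m. x0 \<in> {a \<alpha>..b \<alpha>} \<longrightarrow> gam m a b x0 < 2 * \<epsilon>"
  obtains (tail) "\<forall>t\<in>suppJ m a b. x0 \<le> t \<longrightarrow> t \<le> x0 + 2 * \<epsilon> \<and> gam m a b t \<le> 2 * \<epsilon>"
    | (edge) x1 where "x1 \<in> Jprime m a b \<epsilon>" "x0 + \<epsilon> \<le> x1"
      "\<forall>t\<in>suppJ m a b. x0 \<le> t \<and> t \<le> x1 + \<epsilon> \<longrightarrow> gam m a b t \<le> 4 * \<epsilon> \<and> (t \<le> x0 + 2 * \<epsilon> \<or> x1 - 3 * \<epsilon> \<le> t)"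
proof -
  define S where "S = {\<beta>. \<beta> < m \<and> x0 \<le> a \<beta> + 2 * \<epsilon>}"
  show ?thesis
  proof (cases "S = {}")
    case True
    have "t \<le> x0 + 2 * \<epsilon> \<and> gam m a b t \<le> 2 * \<epsilon>" if t: "t \<in> suppJ m a b" "x0 \<le> t" for t
    proof -
      obtain \<zeta> where \<zeta>: "\<zeta> < m" "t \<in> {a \<zeta>..b \<zeta>}" using t unfolding suppJ_def by auto
      then have "a \<zeta> + 2 * \<epsilon> < x0" using True by (auto simp: S_def)
      with \<zeta> t show ?thesis using support_ends_soon[OF \<epsilon> not_bulk] by simp
    qed
    then show ?thesis by (intro tail) auto
  next
    case False
    define \<beta> where "\<beta> = arg_min_on a S"
    have "finite S" by (simp add: S_def)
    then have "\<beta> \<in> S" and first: "\<And>\<zeta>. \<zeta> \<in> S \<Longrightarrow> a \<beta> \<le> a \<zeta>"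
      using arg_min_if_finite[of S a] False unfolding \<beta>_def by (auto simp: not_less)
    then have "\<beta> < m" and x0_\<beta>: "x0 \<le> a \<beta> + 2 * \<epsilon>" by (auto simp: S_def)
    have len: "10 * \<epsilon> \<le> b \<beta> - a \<beta>" using long \<open>\<beta> < m\<close> by blast
    define x1 where "x1 = a \<beta> + 3 * \<epsilon>"
    have x1_\<beta>: "x1 \<in> {a \<beta>..b \<beta>}" using len \<epsilon> by (auto simp: x1_def)
    have "gam m a b x1 = min (x1 - a \<beta>) (b \<beta> - x1)" by (rule gam_eq_on_interval[OF \<open>\<beta> < m\<close> x1_\<beta>])
    then have "x1 \<in> Jprime m a b \<epsilon>"
      using len \<epsilon> x1_\<beta> \<open>\<beta> < m\<close> by (intro Jprime_memI[of \<beta>]) (auto simp: x1_def)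
    moreover have "x0 + \<epsilon> \<le> x1" using x0_\<beta> by (simp add: x1_def)
    moreover have "gam m a b t \<le> 4 * \<epsilon> \<and> (t \<le> x0 + 2 * \<epsilon> \<or> x1 - 3 * \<epsilon> \<le> t)"
      if "t \<in> suppJ m a b" "x0 \<le> t" "t \<le> x1 + \<epsilon>" for t
      using first_interval_cover[OF \<epsilon> long not_bulk \<open>\<beta> < m\<close>, of t] first that
      by (auto simp: S_def x1_def)
    ultimately show ?thesis by (intro edge) auto
  qed
qed

lemma near_edge_left_cases:
  assumes \<epsilon>: "0 < \<epsilon>" and long: "\<forall>\<alpha><m. 10 * \<epsilon> \<le> b \<alpha> - a \<alpha>"
    and not_bulk: "\<forall>\<alpha><m. x0 \<in> {a \<alpha>..b \<alpha>} \<longrightarrow> gam m a b x0 < 2 * \<epsilon>"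
  obtains (tail) "\<forall>t\<in>suppJ m a b. t \<le> x0 \<longrightarrow> x0 - 2 * \<epsilon> \<le> t \<and> gam m a b t \<le> 2 * \<epsilon>"
    | (edge) x1 where "x1 \<in> Jprime m a b \<epsilon>" "x1 \<le> x0 - \<epsilon>"
      "\<forall>t\<in>suppJ m a b. x1 - \<epsilon> \<le> t \<and> t \<le> x0 \<longrightarrow> gam m a b t \<le> 4 * \<epsilon> \<and> (x0 - 2 * \<epsilon> \<le> t \<or> t \<le> x1 + 3 * \<epsilon>)"
proof -
  interpret R: disjoint_intervals m "\<lambda>\<alpha>. - b \<alpha>" "\<lambda>\<alpha>. - a \<alpha>" by (rule reflect)
  have long': "\<forall>\<alpha><m. 10 * \<epsilon> \<le> - a \<alpha> - - b \<alpha>" using long by simp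
  have not_bulk': "\<forall>\<alpha><m. - x0 \<in> {- b \<alpha>..- a \<alpha>} \<longrightarrow> gam m (\<lambda>\<alpha>. - b \<alpha>) (\<lambda>\<alpha>. - a \<alpha>) (- x0) < 2 * \<epsilon>"
    using not_bulk by (auto simp: gam_reflect)
  show ?thesis using \<epsilon> long' not_bulk'
  proof (cases rule: R.near_edge_right_cases)
    case tail
    show ?thesis
    proof (rule that(1), intro ballI impI)
      fix t assume "t \<in> suppJ m a b" "t \<le> x0"
      then show "x0 - 2 * \<epsilon> \<le> t \<and> gam m a b t \<le> 2 * \<epsilon>"
        using tail[rule_format, of "- t"] by (simp add: suppJ_reflect gam_reflect)
    qed
  next
    case (edge x1)
    have "gam m a b t \<le> 4 * \<epsilon> \<and> (x0 - 2 * \<epsilon> \<le> t \<or> t \<le> - x1 + 3 * \<epsilon>)"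
      if "t \<in> suppJ m a b" "- x1 - \<epsilon> \<le> t" "t \<le> x0" for t
      using edge(3)[rule_format, of "- t"] that by (auto simp: suppJ_reflect gam_reflect)
    moreover have "- x1 \<in> Jprime m a b \<epsilon>" using edge(1) by (simp add: Jprime_reflect)
    ultimately show ?thesis using edge(2) by (intro that(2)[of "- x1"]) auto
  qed
qed

end

section \<open>Densities with square-root edges\<close>

lemma abs_cont_on_UNIV_imp_isCont:
  assumes "abs_cont_on UNIV f"
  shows "isCont f x"
  unfolding isCont_def LIM_eq
proof (intro allI impI)
  fix r :: real assume "0 < r"
  then obtain d where "0 < d" and d: "\<forall>n::nat. \<forall>s t :: nat \<Rightarrow> real.
     (\<forall>i<n. s i \<le> t i \<and> {s i..t i} \<subseteq> UNIV) \<and>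
     (\<forall>i<n. \<forall>j<n. i \<noteq> j \<longrightarrow> t i \<le> s j \<or> t j \<le> s i) \<and>
     (\<Sum>i<n. t i - s i) < d \<longrightarrow> (\<Sum>i<n. \<bar>f (t i) - f (s i)\<bar>) < r"
    using assms unfolding abs_cont_on_def by blast
  show "\<exists>s>0. \<forall>y. y \<noteq> x \<and> norm (y - x) < s \<longrightarrow> norm (f y - f x) < r"
  proof (intro exI[of _ d] conjI allI impI)
    fix y assume "y \<noteq> x \<and> norm (y - x) < d"
    then show "norm (f y - f x) < r"
      using d[rule_format, where n=1 and s="\<lambda>_. min x y" and t="\<lambda>_. max x y"]
      by (cases "x \<le> y") (auto simp: min_def max_def abs_minus_commute)
  qed fact
qed

locale soft_edge_density = disjoint_intervals +
  fixes N :: "real measure" and g :: "real \<Rightarrow> real"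
  assumes N_distr: "real_distribution N"
    and g_meas [measurable]: "g \<in> borel_measurable borel"
    and g_nonneg: "\<forall>x. 0 \<le> g x"
    and N_density: "N = density lborel (\<lambda>x. ennreal (g x))"
    and g_bounded: "\<exists>K. \<forall>x. \<bar>g x\<bar> \<le> K"
    and g_ac: "abs_cont_on UNIV g"
    and support: "measure_support N = suppJ m a b"
    and edges: "\<forall>\<alpha><m. \<forall>c\<in>{a \<alpha>, b \<alpha>}. \<exists>c1>0. \<exists>c2>0. \<exists>\<delta>>0.
        \<forall>x\<in>suppJ m a b. \<bar>x - c\<bar> < \<delta> \<longrightarrow> c1 * sqrt \<bar>x - c\<bar> \<le> g x \<and> g x \<le> c2 * sqrt \<bar>x - c\<bar>"
begin

sublocale N: real_distribution N by (rule N_distr)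

lemma emeasure_N: "A \<in> sets borel \<Longrightarrow> emeasure N A = (\<integral>\<^sup>+ x. ennreal (g x) * indicator A x \<partial>lborel)"
  by (simp add: N_density emeasure_density)

text \<open>Where the continuous density is positive, every ball has positive mass.\<close>
lemma density_eq_0_outside:
  assumes "t \<notin> suppJ m a b"
  shows "g t = 0"
proof (rule ccontr)
  assume "g t \<noteq> 0"
  then have pos: "0 < g t" using g_nonneg by (metis less_eq_real_def)
  have "\<forall>\<^sub>F x in at t. g t / 2 < g x"
    using abs_cont_on_UNIV_imp_isCont[OF g_ac, of t] pos unfolding isCont_def
    by (intro order_tendstoD(1)) auto
  then obtain d where "0 < d" and d': "\<And>x. x \<noteq> t \<Longrightarrow> dist x t < d \<Longrightarrow> g t / 2 < g x"
    unfolding eventually_at by blast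
  have d: "g t / 2 \<le> g x" if "\<bar>x - t\<bar> < d" for x
    using d'[of x] that pos by (cases "x = t") (auto simp: dist_real_def)
  have "t \<in> measure_support N"
    unfolding measure_support_def
  proof (intro CollectI allI impI)
    fix e :: real assume "0 < e"
    define r where "r = min e d / 2"
    have r: "0 < r" "r < e" "r < d" using \<open>0 < e\<close> \<open>0 < d\<close> by (auto simp: r_def)
    have "0 < ennreal (g t / 2 * (2 * r))" using r pos by simp
    also have "ennreal (g t / 2 * (2 * r)) = (\<integral>\<^sup>+ x. ennreal (g t / 2) * indicator {t - r..t + r} x \<partial>lborel)"
      using r pos by (subst nn_integral_cmult_indicator) (auto simp: emeasure_lborel_Icc_eq ennreal_mult[symmetric])
    also have "\<dots> \<le> (\<integral>\<^sup>+ x. ennreal (g x) * indicator (ball t e) x \<partial>lborel)"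
      using r d by (intro nn_integral_mono) (auto simp: dist_real_def intro!: ennreal_leI split: split_indicator)
    also have "\<dots> = emeasure N (ball t e)" by (simp add: emeasure_N)
    finally show "0 < measure N (ball t e)" by (simp add: N.emeasure_eq_measure)
  qed
  then show False using assms support by simp
qed

lemma density_le_sqrt_dist_endpoint:
  assumes "\<alpha> < m" and c: "c \<in> {a \<alpha>, b \<alpha>}"
  shows "\<exists>C\<ge>0. \<forall>t\<in>suppJ m a b. g t \<le> C * sqrt \<bar>t - c\<bar>"
proof -
  obtain K where K: "\<And>x. \<bar>g x\<bar> \<le> K" using g_bounded by blast
  obtain c2 \<delta> where "0 < c2" "0 < \<delta>"
    and near: "\<And>t. t \<in> suppJ m a b \<Longrightarrow> \<bar>t - c\<bar> < \<delta> \<Longrightarrow> g t \<le> c2 * sqrt \<bar>t - c\<bar>"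
    using edges \<open>\<alpha> < m\<close> c by metis
  define C where "C = max c2 (K / sqrt \<delta>)"
  have "g t \<le> C * sqrt \<bar>t - c\<bar>" if "t \<in> suppJ m a b" for t
  proof (cases "\<bar>t - c\<bar> < \<delta>")
    case True
    then have "g t \<le> c2 * sqrt \<bar>t - c\<bar>" using near that by blast
    also have "\<dots> \<le> C * sqrt \<bar>t - c\<bar>" by (intro mult_right_mono) (auto simp: C_def)
    finally show ?thesis .
  next
    case False
    have "g t \<le> (K / sqrt \<delta>) * sqrt \<delta>" using K[of t] \<open>0 < \<delta>\<close> by simp
    also have "\<dots> \<le> C * sqrt \<bar>t - c\<bar>"
      using False K[of 0] \<open>0 < \<delta>\<close> \<open>0 < c2\<close> by (intro mult_mono) (auto simp: C_def)
    finally show ?thesis .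
  qed
  moreover have "0 \<le> C" using \<open>0 < c2\<close> by (simp add: C_def)
  ultimately show ?thesis by blast
qed

lemma exists_density_le_sqrt_gam: "\<exists>C\<ge>0. \<forall>t. g t \<le> C * sqrt (gam m a b t)"
proof -
  have "\<forall>\<alpha>\<in>{..<m}. \<exists>C\<ge>0. \<forall>t\<in>suppJ m a b. g t \<le> C * sqrt \<bar>t - a \<alpha>\<bar> \<and> g t \<le> C * sqrt \<bar>b \<alpha> - t\<bar>"
  proof
    fix \<alpha> assume "\<alpha> \<in> {..<m}"
    then obtain Ca Cb where "0 \<le> Ca" "\<forall>t\<in>suppJ m a b. g t \<le> Ca * sqrt \<bar>t - a \<alpha>\<bar>"
      and "0 \<le> Cb" "\<forall>t\<in>suppJ m a b. g t \<le> Cb * sqrt \<bar>t - b \<alpha>\<bar>"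
      using density_le_sqrt_dist_endpoint[of \<alpha>] by (metis insertI1 insertI2 singletonI lessThan_iff)
    then show "\<exists>C\<ge>0. \<forall>t\<in>suppJ m a b. g t \<le> C * sqrt \<bar>t - a \<alpha>\<bar> \<and> g t \<le> C * sqrt \<bar>b \<alpha> - t\<bar>"
      by (intro exI[of _ "max Ca Cb"])
         (auto simp: abs_minus_commute intro: order_trans[OF _ mult_right_mono[OF max.cobounded1]]
           order_trans[OF _ mult_right_mono[OF max.cobounded2]])
  qed
  then obtain C where C: "\<And>\<alpha>. \<alpha> < m \<Longrightarrow> 0 \<le> C \<alpha>"
    "\<And>\<alpha> t. \<alpha> < m \<Longrightarrow> t \<in> suppJ m a b \<Longrightarrow> g t \<le> C \<alpha> * sqrt \<bar>t - a \<alpha>\<bar> \<and> g t \<le> C \<alpha> * sqrt \<bar>b \<alpha> - t\<bar>"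
    by (metis bchoice lessThan_iff)
  define C_tot where "C_tot = (\<Sum>\<alpha><m. C \<alpha>)"
  have C_le: "C \<alpha> \<le> C_tot" if "\<alpha> < m" for \<alpha>
    unfolding C_tot_def using C(1) that by (intro member_le_sum) auto
  have "g t \<le> C_tot * sqrt (gam m a b t)" for t
  proof (cases "t \<in> suppJ m a b")
    case True
    obtain \<alpha> where "\<alpha> < m" and \<alpha>: "gam m a b t = min \<bar>t - a \<alpha>\<bar> \<bar>b \<alpha> - t\<bar>"
      using gam_attained[OF m_pos] by blast
    then have "g t \<le> C \<alpha> * sqrt (gam m a b t)"
      using C(2)[OF \<open>\<alpha> < m\<close> True] by (simp add: min_def)
    also have "\<dots> \<le> C_tot * sqrt (gam m a b t)" using C_le[OF \<open>\<alpha> < m\<close>] gam_nonneg[OF m_pos] by (intro mult_right_mono) auto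
    finally show ?thesis .
  next
    case False
    moreover have "0 \<le> C_tot" unfolding C_tot_def using C(1) by (auto intro: sum_nonneg)
    ultimately show ?thesis using density_eq_0_outside gam_nonneg[OF m_pos] by simp
  qed
  moreover have "0 \<le> C_tot" unfolding C_tot_def using C(1) by (auto intro: sum_nonneg)
  ultimately show ?thesis by blast
qed

lemma measure_le_sqrt_gam_length:
  assumes C: "0 \<le> C" "\<forall>t. g t \<le> C * sqrt (gam m a b t)"
    and A [measurable]: "A \<in> sets borel" and "0 \<le> \<gamma>" "c1 \<le> d1" "c2 \<le> d2"
    and covered: "\<And>t. t \<in> A \<Longrightarrow> t \<in> suppJ m a b \<Longrightarrow> gam m a b t \<le> \<gamma> \<and> (t \<in> {c1..d1} \<or> t \<in> {c2..d2})"
  shows "measure N A \<le> C * sqrt \<gamma> * ((d1 - c1) + (d2 - c2))"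
proof -
  let ?B = "C * sqrt \<gamma>"
  have B: "0 \<le> ?B" using C \<open>0 \<le> \<gamma>\<close> by simp
  have "g t * indicator A t \<le> ?B * indicator {c1..d1} t + ?B * indicator {c2..d2} t" for t
  proof (cases "t \<in> A \<and> t \<in> suppJ m a b")
    case True
    then have "g t \<le> ?B"
      using covered C by (meson mult_left_mono order_trans real_sqrt_le_mono)
    then show ?thesis using covered True B by (auto split: split_indicator)
  next
    case False
    then show ?thesis using density_eq_0_outside B by (auto split: split_indicator)
  qed
  then have "emeasure N A \<le> (\<integral>\<^sup>+ t. ennreal (?B * indicator {c1..d1} t + ?B * indicator {c2..d2} t) \<partial>lborel)"
    unfolding emeasure_N[OF A]
    by (intro nn_integral_mono) (simp add: ennreal_leI flip: ennreal_indicator ennreal_mult'')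
  also have "\<dots> = ennreal ?B * emeasure lborel {c1..d1} + ennreal ?B * emeasure lborel {c2..d2}"
    using B by (simp add: nn_integral_add ennreal_mult' ennreal_indicator nn_integral_cmult_indicator)
  also have "\<dots> = ennreal (?B * ((d1 - c1) + (d2 - c2)))"
    using B assms by (simp add: ennreal_mult[symmetric] ennreal_plus[symmetric] distrib_left del: ennreal_plus)
  finally show ?thesis using B assms by (simp add: N.emeasure_eq_measure)
qed

end

section \<open>Comparison with an arbitrary distribution\<close>

locale cdf_comparison = soft_edge_density +
  fixes C :: real and M :: "real measure" and v \<epsilon> V R D :: real
  assumes C_nonneg: "0 \<le> C" and density_le: "\<forall>t. g t \<le> C * sqrt (gam m a b t)"
    and M: "real_distribution M"
    and v_pos: "0 < v" and \<epsilon>_pos: "0 < \<epsilon>" and v_less_V: "v < V"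
    and long: "\<forall>\<alpha><m. 10 * \<epsilon> \<le> b \<alpha> - a \<alpha>" and v_small: "4 * v \<le> \<epsilon> * sqrt \<epsilon>"
    and R_nonneg: "0 \<le> R"
    and smoothed_diff_le: "\<forall>x\<in>Jprime m a b \<epsilon>.
      \<bar>cauchy_smoothed_cdf M (min (v / sqrt (gam m a b x)) V) x
        - cauchy_smoothed_cdf N (min (v / sqrt (gam m a b x)) V) x\<bar> \<le> R"
    and cdf_diff_le: "\<forall>x. \<bar>cdf M x - cdf N x\<bar> \<le> D"
begin

sublocale M: real_distribution M by (rule M)

definition height :: "real \<Rightarrow> real" where
  "height x = min (v / sqrt (gam m a b x)) V"

lemma height_pos: "x \<in> Jprime m a b \<epsilon> \<Longrightarrow> 0 < height x"
  using Jprime_gam_ge[of x m a b \<epsilon>] \<epsilon>_pos v_pos v_less_V unfolding height_def by simp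

lemma sqrt3_height_le:
  assumes "0 < \<gamma>" "\<gamma> \<le> gam m a b x"
  shows "sqrt 3 * height x \<le> sqrt 3 * v / sqrt \<gamma>"
proof -
  have "v / sqrt (gam m a b x) \<le> v / sqrt \<gamma>"
    using assms v_pos by (intro divide_left_mono real_sqrt_le_mono mult_pos_pos) auto
  then have "height x \<le> v / sqrt \<gamma>" unfolding height_def by linarith
  from mult_left_mono[OF this, of "sqrt 3"] show ?thesis by simp
qed

lemma sqrt3_height_le_eps:
  assumes "x \<in> Jprime m a b \<epsilon>"
  shows "sqrt 3 * height x \<le> \<epsilon>"
proof -
  have "sqrt 3 * height x \<le> sqrt 3 * v / sqrt (\<epsilon> / 2)"
    using \<epsilon>_pos Jprime_gam_ge[OF assms] by (intro sqrt3_height_le) auto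
  also have "\<dots> = sqrt 6 * v / sqrt \<epsilon>"
    by (simp add: real_sqrt_divide real_sqrt_mult[of 3 2, symmetric])
  also have "\<dots> \<le> 4 * v / sqrt \<epsilon>"
    using v_pos \<epsilon>_pos by (intro divide_right_mono mult_right_mono real_le_lsqrt) auto
  also have "\<dots> \<le> \<epsilon>"
    using v_small \<epsilon>_pos by (simp add: divide_le_eq)
  finally show ?thesis .
qed

lemma cdf_diff_upper_via_Jprime:
  assumes x1: "x1 \<in> Jprime m a b \<epsilon>" and "x0 + sqrt 3 * height x1 \<le> x1"
  shows "cdf M x0 - cdf N x0 \<le> (cdf N (x1 + sqrt 3 * height x1) - cdf N x0) + (3 * R + D) / 2"
proof -
  have "\<bar>cauchy_smoothed_cdf M (height x1) x1 - cauchy_smoothed_cdf N (height x1) x1\<bar> \<le> R"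
    using smoothed_diff_le x1 unfolding height_def by blast
  moreover have "cdf M x0 - cdf N x0 \<le> (cdf N (x1 + sqrt 3 * height x1) - cdf N x0)
      + (3 * \<bar>cauchy_smoothed_cdf M (height x1) x1 - cauchy_smoothed_cdf N (height x1) x1\<bar> + D) / 2"
    using cdf_diff_le assms(2) by (intro cdf_diff_upper_via_smoothing[OF M N_distr height_pos[OF x1]]) auto
  ultimately show ?thesis by (simp add: field_simps)
qed

lemma cdf_diff_lower_via_Jprime:
  assumes x1: "x1 \<in> Jprime m a b \<epsilon>" and "x1 + sqrt 3 * height x1 \<le> x0"
  shows "cdf N x0 - cdf M x0 \<le> (cdf N x0 - cdf N (x1 - sqrt 3 * height x1)) + (3 * R + D) / 2"
proof -
  have "\<bar>cauchy_smoothed_cdf M (height x1) x1 - cauchy_smoothed_cdf N (height x1) x1\<bar> \<le> R"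
    using smoothed_diff_le x1 unfolding height_def by blast
  moreover have "cdf N x0 - cdf M x0 \<le> (cdf N x0 - cdf N (x1 - sqrt 3 * height x1))
      + (3 * \<bar>cauchy_smoothed_cdf M (height x1) x1 - cauchy_smoothed_cdf N (height x1) x1\<bar> + D) / 2"
    using cdf_diff_le assms(2) by (intro cdf_diff_lower_via_smoothing[OF M N_distr height_pos[OF x1]]) auto
  ultimately show ?thesis by (simp add: field_simps)
qed

lemma cdf_increment_le:
  assumes "p < q" "0 \<le> \<gamma>" "c1 \<le> d1" "c2 \<le> d2"
    and covered: "\<And>t. p < t \<Longrightarrow> t \<le> q \<Longrightarrow> t \<in> suppJ m a b \<Longrightarrow> gam m a b t \<le> \<gamma> \<and> (t \<in> {c1..d1} \<or> t \<in> {c2..d2})"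
  shows "cdf N q - cdf N p \<le> C * sqrt \<gamma> * ((d1 - c1) + (d2 - c2))"
  using measure_le_sqrt_gam_length[OF C_nonneg density_le, of "{p<..q}"] assms
  by (simp add: N.cdf_diff_eq)

lemma bulk_step_le:
  assumes "2 * \<epsilon> \<le> gam m a b x0"
  shows "sqrt 6 * v / sqrt (gam m a b x0) \<le> gam m a b x0 / 2"
proof -
  have "sqrt 6 * v \<le> 4 * v" using v_pos by (intro mult_right_mono real_le_lsqrt) auto
  also have "\<dots> \<le> \<epsilon> * sqrt \<epsilon>" by (rule v_small)
  also have "\<dots> \<le> gam m a b x0 / 2 * sqrt (gam m a b x0)"
    using assms \<epsilon>_pos by (intro mult_mono real_sqrt_le_mono) auto
  finally show ?thesis using assms \<epsilon>_pos by (simp add: divide_le_eq)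
qed

lemma bulk_neighbour:
  assumes "\<alpha> < m" "x0 \<in> {a \<alpha>..b \<alpha>}" and bulk: "2 * \<epsilon> \<le> gam m a b x0"
    and x1: "\<bar>x1 - x0\<bar> = sqrt 6 * v / sqrt (gam m a b x0)"
  shows "x1 \<in> Jprime m a b \<epsilon>" and "sqrt 3 * height x1 \<le> \<bar>x1 - x0\<bar>"
proof -
  have "\<bar>x1 - x0\<bar> \<le> gam m a b x0 / 2" using x1 bulk_step_le[OF bulk] by simp
  from shift_within_interval[OF assms(1,2) this]
  have "x1 \<in> {a \<alpha>..b \<alpha>}" and half: "gam m a b x0 / 2 \<le> gam m a b x1" .
  then show "x1 \<in> Jprime m a b \<epsilon>"
    using bulk \<open>\<alpha> < m\<close> gam_nonneg[OF m_pos, of a b x1] by (intro Jprime_memI) auto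
  have "sqrt 3 * height x1 \<le> sqrt 3 * v / sqrt (gam m a b x0 / 2)"
    using half bulk \<epsilon>_pos by (intro sqrt3_height_le) auto
  also have "\<dots> = \<bar>x1 - x0\<bar>"
    by (simp add: x1 real_sqrt_divide real_sqrt_mult[of 3 2, symmetric])
  finally show "sqrt 3 * height x1 \<le> \<bar>x1 - x0\<bar>" .
qed

lemma bulk_increment_le:
  assumes bulk: "2 * \<epsilon> \<le> gam m a b x0" and s: "s = sqrt 6 * v / sqrt (gam m a b x0)"
    and "x0 - 2 * s \<le> p" "p < q" "q \<le> x0 + 2 * s" "q - p \<le> 2 * s"
  shows "cdf N q - cdf N p \<le> 8 * C * v"
proof -
  let ?\<gamma> = "gam m a b x0"
  have \<gamma>: "0 < ?\<gamma>" using bulk \<epsilon>_pos by simp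
  have s_le: "s \<le> ?\<gamma> / 2" using bulk_step_le[OF bulk] s by simp
  have "cdf N q - cdf N p \<le> C * sqrt (2 * ?\<gamma>) * ((q - p) + (q - q))"
  proof (rule cdf_increment_le)
    fix t assume "p < t" "t \<le> q"
    then have "gam m a b t \<le> ?\<gamma> + 2 * s"
      using gam_lipschitz[OF m_pos, of a b t x0] assms by simp
    then show "gam m a b t \<le> 2 * ?\<gamma> \<and> (t \<in> {p..q} \<or> t \<in> {q..q})"
      using s_le \<open>p < t\<close> \<open>t \<le> q\<close> by simp
  qed (use assms \<gamma> in auto)
  also have "\<dots> \<le> C * sqrt (2 * ?\<gamma>) * (2 * s)"
    using assms C_nonneg \<gamma> by (intro mult_left_mono) auto
  also have "\<dots> = 2 * (sqrt 2 * sqrt 6) * C * v"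
    using \<gamma> by (simp add: s real_sqrt_mult[of 2 "?\<gamma>"])
  also have "sqrt 2 * sqrt 6 = 2 * sqrt 3"
    using real_sqrt_mult[of "2\<^sup>2" 3] by (simp flip: real_sqrt_mult)
  also have "2 * (2 * sqrt 3) * C * v \<le> 8 * C * v"
    using C_nonneg v_pos by (intro mult_right_mono) (auto intro: real_le_lsqrt)
  finally show ?thesis .
qed

lemma cdf_diff_upper_bulk:
  assumes "\<alpha> < m" "x0 \<in> {a \<alpha>..b \<alpha>}" and bulk: "2 * \<epsilon> \<le> gam m a b x0"
  shows "cdf M x0 - cdf N x0 \<le> 8 * C * v + (3 * R + D) / 2"
proof -
  define s where "s = sqrt 6 * v / sqrt (gam m a b x0)"
  define x1 where "x1 = x0 + s"
  have "0 < s" using bulk \<epsilon>_pos v_pos by (simp add: s_def)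
  then have "\<bar>x1 - x0\<bar> = s" by (simp add: x1_def)
  note neighbour = bulk_neighbour[OF assms, of x1, unfolded this, OF s_def]
  have "0 < sqrt 3 * height x1" using height_pos[OF neighbour(1)] by simp
  have "cdf M x0 - cdf N x0 \<le> (cdf N (x1 + sqrt 3 * height x1) - cdf N x0) + (3 * R + D) / 2"
    using neighbour by (intro cdf_diff_upper_via_Jprime) (auto simp: x1_def)
  moreover have "cdf N (x1 + sqrt 3 * height x1) - cdf N x0 \<le> 8 * C * v"
    using neighbour \<open>0 < s\<close> \<open>0 < sqrt 3 * height x1\<close>
    by (intro bulk_increment_le[OF bulk s_def]) (auto simp: x1_def)
  ultimately show ?thesis by linarith
qed

lemma cdf_diff_lower_bulk:
  assumes "\<alpha> < m" "x0 \<in> {a \<alpha>..b \<alpha>}" and bulk: "2 * \<epsilon> \<le> gam m a b x0"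
  shows "cdf N x0 - cdf M x0 \<le> 8 * C * v + (3 * R + D) / 2"
proof -
  define s where "s = sqrt 6 * v / sqrt (gam m a b x0)"
  define x1 where "x1 = x0 - s"
  have "0 < s" using bulk \<epsilon>_pos v_pos by (simp add: s_def)
  then have "\<bar>x1 - x0\<bar> = s" by (simp add: x1_def)
  note neighbour = bulk_neighbour[OF assms, of x1, unfolded this, OF s_def]
  have "0 < sqrt 3 * height x1" using height_pos[OF neighbour(1)] by simp
  have "cdf N x0 - cdf M x0 \<le> (cdf N x0 - cdf N (x1 - sqrt 3 * height x1)) + (3 * R + D) / 2"
    using neighbour by (intro cdf_diff_lower_via_Jprime) (auto simp: x1_def)
  moreover have "cdf N x0 - cdf N (x1 - sqrt 3 * height x1) \<le> 8 * C * v"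
    using neighbour \<open>0 < s\<close> \<open>0 < sqrt 3 * height x1\<close>
    by (intro bulk_increment_le[OF bulk s_def]) (auto simp: x1_def)
  ultimately show ?thesis by linarith
qed

lemma cdf_diff_upper_edge:
  assumes x1: "x1 \<in> Jprime m a b \<epsilon>" "x0 + \<epsilon> \<le> x1"
    and covered: "\<forall>t\<in>suppJ m a b. x0 \<le> t \<and> t \<le> x1 + \<epsilon> \<longrightarrow>
      gam m a b t \<le> 4 * \<epsilon> \<and> (t \<le> x0 + 2 * \<epsilon> \<or> x1 - 3 * \<epsilon> \<le> t)"
  shows "cdf M x0 - cdf N x0 \<le> 12 * C * (\<epsilon> * sqrt \<epsilon>) + (3 * R + D) / 2"
proof -
  have h: "0 < sqrt 3 * height x1" "sqrt 3 * height x1 \<le> \<epsilon>"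
    using height_pos[OF x1(1)] sqrt3_height_le_eps[OF x1(1)] by auto
  have "cdf M x0 - cdf N x0 \<le> (cdf N (x1 + sqrt 3 * height x1) - cdf N x0) + (3 * R + D) / 2"
    using x1 h by (intro cdf_diff_upper_via_Jprime) auto
  moreover have "cdf N (x1 + sqrt 3 * height x1) - cdf N x0
      \<le> C * sqrt (4 * \<epsilon>) * ((x0 + 2 * \<epsilon> - x0) + (x1 + \<epsilon> - (x1 - 3 * \<epsilon>)))"
    using x1 h covered \<epsilon>_pos by (intro cdf_increment_le) auto
  moreover have "C * sqrt (4 * \<epsilon>) * ((x0 + 2 * \<epsilon> - x0) + (x1 + \<epsilon> - (x1 - 3 * \<epsilon>)))
      = 12 * C * (\<epsilon> * sqrt \<epsilon>)"
    by (simp add: real_sqrt_mult)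
  ultimately show ?thesis by linarith
qed

lemma cdf_diff_lower_edge:
  assumes x1: "x1 \<in> Jprime m a b \<epsilon>" "x1 \<le> x0 - \<epsilon>"
    and covered: "\<forall>t\<in>suppJ m a b. x1 - \<epsilon> \<le> t \<and> t \<le> x0 \<longrightarrow>
      gam m a b t \<le> 4 * \<epsilon> \<and> (x0 - 2 * \<epsilon> \<le> t \<or> t \<le> x1 + 3 * \<epsilon>)"
  shows "cdf N x0 - cdf M x0 \<le> 12 * C * (\<epsilon> * sqrt \<epsilon>) + (3 * R + D) / 2"
proof -
  have h: "0 < sqrt 3 * height x1" "sqrt 3 * height x1 \<le> \<epsilon>"
    using height_pos[OF x1(1)] sqrt3_height_le_eps[OF x1(1)] by auto
  have "cdf N x0 - cdf M x0 \<le> (cdf N x0 - cdf N (x1 - sqrt 3 * height x1)) + (3 * R + D) / 2"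
    using x1 h by (intro cdf_diff_lower_via_Jprime) auto
  moreover have "cdf N x0 - cdf N (x1 - sqrt 3 * height x1)
      \<le> C * sqrt (4 * \<epsilon>) * ((x0 - (x0 - 2 * \<epsilon>)) + (x1 + 3 * \<epsilon> - (x1 - \<epsilon>)))"
    using x1 h covered \<epsilon>_pos by (intro cdf_increment_le) auto
  moreover have "C * sqrt (4 * \<epsilon>) * ((x0 - (x0 - 2 * \<epsilon>)) + (x1 + 3 * \<epsilon> - (x1 - \<epsilon>)))
      = 12 * C * (\<epsilon> * sqrt \<epsilon>)"
    by (simp add: real_sqrt_mult)
  ultimately show ?thesis by linarith
qed

lemma sqrt_two_eps_le: "C * sqrt (2 * \<epsilon>) * (2 * \<epsilon>) \<le> 12 * C * (\<epsilon> * sqrt \<epsilon>)"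
proof -
  have "sqrt (2 * \<epsilon>) \<le> 6 * sqrt \<epsilon>"
    using \<epsilon>_pos by (simp add: real_sqrt_mult real_le_lsqrt)
  from mult_left_mono[OF this, of "2 * C * \<epsilon>"] show ?thesis
    using C_nonneg \<epsilon>_pos by (simp add: algebra_simps)
qed

lemma cdf_diff_upper_tail:
  assumes tail: "\<forall>t\<in>suppJ m a b. x0 \<le> t \<longrightarrow> t \<le> x0 + 2 * \<epsilon> \<and> gam m a b t \<le> 2 * \<epsilon>"
  shows "cdf M x0 - cdf N x0 \<le> 12 * C * (\<epsilon> * sqrt \<epsilon>)"
proof -
  have "1 - cdf N x0 = measure N {x0<..}"
    using N.prob_compl[of "{..x0}"] by (simp add: cdf_def Compl_eq_Diff_UNIV[symmetric])
  also have "\<dots> \<le> C * sqrt (2 * \<epsilon>) * ((x0 + 2 * \<epsilon> - x0) + (x0 - x0))"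
    using tail \<epsilon>_pos by (intro measure_le_sqrt_gam_length[OF C_nonneg density_le]) auto
  also have "\<dots> \<le> 12 * C * (\<epsilon> * sqrt \<epsilon>)" using sqrt_two_eps_le by simp
  finally show ?thesis using M.cdf_bounded_prob[of x0] by simp
qed

lemma cdf_diff_lower_tail:
  assumes tail: "\<forall>t\<in>suppJ m a b. t \<le> x0 \<longrightarrow> x0 - 2 * \<epsilon> \<le> t \<and> gam m a b t \<le> 2 * \<epsilon>"
  shows "cdf N x0 - cdf M x0 \<le> 12 * C * (\<epsilon> * sqrt \<epsilon>)"
proof -
  have "cdf N x0 = measure N {..x0}" by (simp add: cdf_def)
  also have "\<dots> \<le> C * sqrt (2 * \<epsilon>) * ((x0 - (x0 - 2 * \<epsilon>)) + (x0 - x0))"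
    using tail \<epsilon>_pos by (intro measure_le_sqrt_gam_length[OF C_nonneg density_le]) auto
  also have "\<dots> \<le> 12 * C * (\<epsilon> * sqrt \<epsilon>)" using sqrt_two_eps_le by simp
  finally show ?thesis using M.cdf_nonneg[of x0] by simp
qed

lemma bound_terms_nonneg: "0 \<le> 8 * C * v" "0 \<le> 12 * C * (\<epsilon> * sqrt \<epsilon>)" "0 \<le> (3 * R + D) / 2"
  using C_nonneg v_pos \<epsilon>_pos R_nonneg order_trans[OF abs_ge_zero cdf_diff_le[rule_format, of 0]] by auto

lemma cdf_diff_upper:
  "cdf M x0 - cdf N x0 \<le> 8 * C * v + 12 * C * (\<epsilon> * sqrt \<epsilon>) + (3 * R + D) / 2"
proof (cases "\<exists>\<alpha><m. x0 \<in> {a \<alpha>..b \<alpha>} \<and> 2 * \<epsilon> \<le> gam m a b x0")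
  case True
  then obtain \<alpha> where "\<alpha> < m" "x0 \<in> {a \<alpha>..b \<alpha>}" "2 * \<epsilon> \<le> gam m a b x0" by blast
  from cdf_diff_upper_bulk[OF this] show ?thesis using bound_terms_nonneg by linarith
next
  case False
  then have "\<forall>\<alpha><m. x0 \<in> {a \<alpha>..b \<alpha>} \<longrightarrow> gam m a b x0 < 2 * \<epsilon>" by auto
  with \<epsilon>_pos long show ?thesis
  proof (cases rule: near_edge_right_cases)
    case tail
    from cdf_diff_upper_tail[OF this] show ?thesis using bound_terms_nonneg by linarith
  next
    case (edge x1)
    from cdf_diff_upper_edge[OF edge] show ?thesis using bound_terms_nonneg by linarith
  qed
qed

lemma cdf_diff_lower:
  "cdf N x0 - cdf M x0 \<le> 8 * C * v + 12 * C * (\<epsilon> * sqrt \<epsilon>) + (3 * R + D) / 2"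
proof (cases "\<exists>\<alpha><m. x0 \<in> {a \<alpha>..b \<alpha>} \<and> 2 * \<epsilon> \<le> gam m a b x0")
  case True
  then obtain \<alpha> where "\<alpha> < m" "x0 \<in> {a \<alpha>..b \<alpha>}" "2 * \<epsilon> \<le> gam m a b x0" by blast
  from cdf_diff_lower_bulk[OF this] show ?thesis using bound_terms_nonneg by linarith
next
  case False
  then have "\<forall>\<alpha><m. x0 \<in> {a \<alpha>..b \<alpha>} \<longrightarrow> gam m a b x0 < 2 * \<epsilon>" by auto
  with \<epsilon>_pos long show ?thesis
  proof (cases rule: near_edge_left_cases)
    case tail
    from cdf_diff_lower_tail[OF this] show ?thesis using bound_terms_nonneg by linarith
  next
    case (edge x1)
    from cdf_diff_lower_edge[OF edge] show ?thesis using bound_terms_nonneg by linarith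
  qed
qed

text \<open>The pointwise bound contains \<open>D / 2\<close> itself, so taking the supremum absorbs it.\<close>
lemma sup_cdf_diff_le:
  assumes D: "D = (SUP x. \<bar>cdf M x - cdf N x\<bar>)"
  shows "D \<le> 16 * C * v + 24 * C * (\<epsilon> * sqrt \<epsilon>) + 3 * R"
proof -
  have "\<bar>cdf M x - cdf N x\<bar> \<le> 8 * C * v + 12 * C * (\<epsilon> * sqrt \<epsilon>) + (3 * R + D) / 2" for x
    using cdf_diff_upper[of x] cdf_diff_lower[of x] by linarith
  then have "D \<le> 8 * C * v + 12 * C * (\<epsilon> * sqrt \<epsilon>) + (3 * R + D) / 2"
    unfolding D by (intro cSUP_least) auto
  then show ?thesis by (simp add: field_simps)
qed

end

lemma cauchy_smoothed_cdf_diff_le_stieltjes_Jprime: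
  assumes M: "real_distribution M" and N: "real_distribution N"
    and x: "x \<in> Jprime m a b \<epsilon>" and "0 < \<epsilon>" "0 < v" "v < V"
  shows "ennreal \<bar>cauchy_smoothed_cdf M (min (v / sqrt (gam m a b x)) V) x
      - cauchy_smoothed_cdf N (min (v / sqrt (gam m a b x)) V) x\<bar>
    \<le> ennreal (1 / pi) * ((\<integral>\<^sup>+ u. ennreal (cmod (stieltjes M (Complex u V) - stieltjes N (Complex u V))) \<partial>lborel)
        + (SUP x\<in>Jprime m a b \<epsilon>.
            \<integral>\<^sup>+ u. ennreal (cmod (stieltjes M (Complex x u) - stieltjes N (Complex x u)))
              * indicator {v / sqrt (gam m a b x)..V} u \<partial>lborel))"
proof -
  define vertical where "vertical x c = (\<integral>\<^sup>+ u. ennreal (cmod (stieltjes M (Complex x u) - stieltjes N (Complex x u)))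
    * indicator {c..V} u \<partial>lborel)" for x c
  let ?y = "min (v / sqrt (gam m a b x)) V"
  have "0 < ?y" using Jprime_gam_ge[OF x] assms by auto
  then have "ennreal \<bar>cauchy_smoothed_cdf M ?y x - cauchy_smoothed_cdf N ?y x\<bar>
      \<le> ennreal (1 / pi) * ((\<integral>\<^sup>+ u. ennreal (cmod (stieltjes M (Complex u V) - stieltjes N (Complex u V))) \<partial>lborel)
        + vertical x ?y)"
    unfolding vertical_def by (intro cauchy_smoothed_cdf_diff_le_stieltjes[OF M N]) auto
  also have "vertical x ?y \<le> vertical x (v / sqrt (gam m a b x))"
    unfolding vertical_def by (rule nn_integral_indicator_min_le)
  also have "\<dots> \<le> (SUP x\<in>Jprime m a b \<epsilon>. vertical x (v / sqrt (gam m a b x)))"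
    by (rule SUP_upper[OF x])
  finally show ?thesis by (simp add: vertical_def mult_left_mono add_left_mono)
qed

context soft_edge_density
begin

lemma sup_cdf_diff_le_stieltjes:
  assumes C: "0 \<le> C" "\<forall>t. g t \<le> C * sqrt (gam m a b t)"
    and M: "real_distribution M" and "0 < v" "0 < \<epsilon>" "v < V"
    and long: "\<forall>\<alpha><m. 10 * \<epsilon> \<le> b \<alpha> - a \<alpha>" and "4 * v \<le> \<epsilon> * sqrt \<epsilon>"
  shows "ennreal (SUP x. \<bar>cdf M x - cdf N x\<bar>)
    \<le> ennreal (16 * C * v + 24 * C * (\<epsilon> * sqrt \<epsilon>))
      + ((\<integral>\<^sup>+ u. ennreal (cmod (stieltjes M (Complex u V) - stieltjes N (Complex u V))) \<partial>lborel)
        + (SUP x\<in>Jprime m a b \<epsilon>.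
            \<integral>\<^sup>+ u. ennreal (cmod (stieltjes M (Complex x u) - stieltjes N (Complex x u)))
              * indicator {v / sqrt (gam m a b x)..V} u \<partial>lborel))"
    (is "_ \<le> _ + ?S")
proof (cases "?S = \<top>")
  case False
  define R where "R = enn2real ?S / pi"
  have "\<bar>cauchy_smoothed_cdf M (min (v / sqrt (gam m a b x)) V) x
      - cauchy_smoothed_cdf N (min (v / sqrt (gam m a b x)) V) x\<bar> \<le> R"
    if "x \<in> Jprime m a b \<epsilon>" for x
  proof -
    have "ennreal \<bar>cauchy_smoothed_cdf M (min (v / sqrt (gam m a b x)) V) x
        - cauchy_smoothed_cdf N (min (v / sqrt (gam m a b x)) V) x\<bar> \<le> ennreal (1 / pi) * ?S"
      using assms by (intro cauchy_smoothed_cdf_diff_le_stieltjes_Jprime[OF M N_distr that]) auto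
    also have "\<dots> = ennreal R"
      unfolding R_def using ennreal_mult_enn2real[OF False, of "1 / pi"] by simp
    finally show ?thesis by (simp add: R_def)
  qed
  then interpret cdf_comparison m a b N g C M v \<epsilon> V R "SUP x. \<bar>cdf M x - cdf N x\<bar>"
    using assms abs_cdf_diff_le_sup[OF M N_distr]
    by (intro cdf_comparison.intro soft_edge_density.intro disjoint_intervals_axioms soft_edge_density_axioms
        cdf_comparison_axioms.intro) (auto simp: R_def)
  have "(SUP x. \<bar>cdf M x - cdf N x\<bar>) \<le> 16 * C * v + 24 * C * (\<epsilon> * sqrt \<epsilon>) + 3 * R"
    by (rule sup_cdf_diff_le) simp
  moreover have "3 * R \<le> enn2real ?S"
    using mult_right_mono[of 3 pi "enn2real ?S"] pi_gt3 by (simp add: R_def divide_le_eq mult.commute)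
  ultimately have "ennreal (SUP x. \<bar>cdf M x - cdf N x\<bar>)
      \<le> ennreal (16 * C * v + 24 * C * (\<epsilon> * sqrt \<epsilon>) + enn2real ?S)"
    by (intro ennreal_leI) linarith
  also have "\<dots> = ennreal (16 * C * v + 24 * C * (\<epsilon> * sqrt \<epsilon>)) + ennreal (enn2real ?S)"
    using bound_terms_nonneg by (intro ennreal_plus) auto
  also have "ennreal (enn2real ?S) = ?S"
    using False by (intro ennreal_enn2real) (simp only: top.not_eq_extremum)
  finally show ?thesis .
next
  case True
  then show ?thesis by (simp only: add_top_right_ennreal top_greatest)
qed

end

text \<open>The constants may depend on \<open>G\<close>, so no smallness of \<open>\<epsilon>\<close> is needed: if some interval is
  shorter than \<open>10 \<epsilon>\<close>, then \<open>\<delta> < \<epsilon>\<close> and \<open>1 \<le> C\<^sub>2 * \<epsilon> powr (3/2)\<close> already dominates \<open>sup |F - G|\<close>.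
  Likewise only the upper edge bound \<open>g \<le> c\<^sub>2 sqrt |x - c|\<close> is used.\<close>
lemma (in soft_edge_density) cdf_distance_le_stieltjes:
  assumes C: "0 \<le> C" "\<forall>t. g t \<le> C * sqrt (gam m a b t)"
    and \<delta>: "0 < \<delta>" "\<forall>\<alpha><m. 10 * \<delta> \<le> b \<alpha> - a \<alpha>"
    and M: "real_distribution M" and "0 < v" "0 < \<epsilon>" "v < V"
    and v_small: "2 * (sqrt 2 + 1) * v \<le> \<epsilon> powr (3/2)"
  shows "ennreal (SUP x. \<bar>cdf M x - cdf N x\<bar>)
    \<le> 2 * (\<integral>\<^sup>+ u. ennreal (cmod (stieltjes M (Complex u V) - stieltjes N (Complex u V))) \<partial>lborel)
      + ennreal ((16 * C + 1) * v) + ennreal (max (24 * C + 1) (1 / (\<delta> * sqrt \<delta>)) * \<epsilon> powr (3/2))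
      + 2 * (SUP x\<in>Jprime m a b \<epsilon>.
             \<integral>\<^sup>+ u. ennreal (cmod (stieltjes M (Complex x u) - stieltjes N (Complex x u)))
                    * indicator {v / sqrt (gam m a b x)..V} u \<partial>lborel)"
proof -
  have \<epsilon>32: "\<epsilon> powr (3/2) = \<epsilon> * sqrt \<epsilon>" using \<open>0 < \<epsilon>\<close> by (simp add: powr_three_halves)
  show ?thesis
  proof (cases "\<forall>\<alpha><m. 10 * \<epsilon> \<le> b \<alpha> - a \<alpha>")
    case True
    have "4 * v \<le> 2 * (sqrt 2 + 1) * v" using \<open>0 < v\<close> by (intro mult_right_mono) auto
    with v_small have "4 * v \<le> \<epsilon> * sqrt \<epsilon>" by (simp add: \<epsilon>32)
    note bound = sup_cdf_diff_le_stieltjes[OF C M \<open>0 < v\<close> \<open>0 < \<epsilon>\<close> \<open>v < V\<close> True this]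
    have "16 * C * v \<le> (16 * C + 1) * v" using \<open>0 < v\<close> by (simp add: algebra_simps)
    moreover have "24 * C * (\<epsilon> * sqrt \<epsilon>) \<le> max (24 * C + 1) (1 / (\<delta> * sqrt \<delta>)) * \<epsilon> powr (3/2)"
      unfolding \<epsilon>32 using \<open>0 < \<epsilon>\<close> by (intro mult_right_mono) auto
    ultimately show ?thesis
      using C \<open>0 < v\<close> \<open>0 < \<epsilon>\<close> by (intro order_trans[OF bound ennreal_sum_le_rearrange]) auto
  next
    case False
    then obtain \<alpha> where "\<alpha> < m" "b \<alpha> - a \<alpha> < 10 * \<epsilon>" by auto
    then have "\<delta> < \<epsilon>" using \<delta> by fastforce
    then have "1 \<le> 1 / (\<delta> * sqrt \<delta>) * (\<epsilon> * sqrt \<epsilon>)"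
      using \<delta> by (intro three_halves_ratio_ge_1) auto
    also have "\<dots> \<le> max (24 * C + 1) (1 / (\<delta> * sqrt \<delta>)) * \<epsilon> powr (3/2)"
      unfolding \<epsilon>32 using \<open>0 < \<epsilon>\<close> by (intro mult_right_mono) auto
    finally have "ennreal (SUP x. \<bar>cdf M x - cdf N x\<bar>)
        \<le> ennreal (max (24 * C + 1) (1 / (\<delta> * sqrt \<delta>)) * \<epsilon> powr (3/2))"
      using sup_abs_cdf_diff_le_1[OF M N_distr] by (intro ennreal_leI) linarith
    then show ?thesis
      by (intro add_increasing order_trans[OF _ add_increasing2]) simp_all
  qed
qed

theorem corollaryB4:
  fixes N :: "real measure" and g :: "real \<Rightarrow> real"
    and m :: nat and a b :: "nat \<Rightarrow> real"
  assumes m_pos: "m > 0"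
    and intervals: "\<forall>\<alpha><m. a \<alpha> < b \<alpha>"
    and disjoint: "\<forall>\<alpha><m. \<forall>\<beta><m. \<alpha> \<noteq> \<beta> \<longrightarrow> b \<alpha> < a \<beta> \<or> b \<beta> < a \<alpha>"
    and N_distr: "real_distribution N"
    and g_meas: "g \<in> borel_measurable borel"
    and g_nonneg: "\<forall>x. 0 \<le> g x"
    and N_density: "N = density lborel (\<lambda>x. ennreal (g x))"
    and g_bounded: "\<exists>K. \<forall>x. \<bar>g x\<bar> \<le> K"
    and g_ac: "abs_cont_on UNIV g"
    and support: "measure_support N = suppJ m a b"
    and edges: "\<forall>\<alpha><m. \<forall>c\<in>{a \<alpha>, b \<alpha>}. \<exists>c1>0. \<exists>c2>0. \<exists>\<delta>>0.
        \<forall>x\<in>suppJ m a b. \<bar>x - c\<bar> < \<delta> \<longrightarrow>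
          c1 * sqrt \<bar>x - c\<bar> \<le> g x \<and> g x \<le> c2 * sqrt \<bar>x - c\<bar>"
  shows "\<exists>C1>0. \<exists>C2>0. \<forall>M :: real measure. \<forall>v \<epsilon> V :: real.
      real_distribution M \<longrightarrow> v > 0 \<longrightarrow> 0 < \<epsilon> \<longrightarrow> \<epsilon> < 1/2 \<longrightarrow>
      (\<forall>\<alpha><m. \<epsilon> < (b \<alpha> - a \<alpha>) / 2) \<longrightarrow>
      2 * (sqrt 2 + 1) * v \<le> \<epsilon> powr (3/2) \<longrightarrow> V > v \<longrightarrow>
      ennreal (SUP x. \<bar>cdf M x - cdf N x\<bar>)
        \<le> 2 * (\<integral>\<^sup>+ u. ennreal (cmod (stieltjes M (Complex u V) - stieltjes N (Complex u V))) \<partial>lborel)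
          + ennreal (C1 * v) + ennreal (C2 * \<epsilon> powr (3/2))
          + 2 * (SUP x\<in>Jprime m a b \<epsilon>.
                 \<integral>\<^sup>+ u. ennreal (cmod (stieltjes M (Complex x u) - stieltjes N (Complex x u)))
                        * indicator {v / sqrt (gam m a b x)..V} u \<partial>lborel)"
proof -
  interpret soft_edge_density m a b N g
    by (intro soft_edge_density.intro disjoint_intervals.intro soft_edge_density_axioms.intro) (rule assms)+
  obtain C where C: "0 \<le> C" "\<forall>t. g t \<le> C * sqrt (gam m a b t)"
    using exists_density_le_sqrt_gam by blast
  obtain e where "0 < e" and e: "\<forall>\<alpha><m. e \<le> b \<alpha> - a \<alpha>"
    using exists_lower_bound_lengths by blast
  then have \<delta>: "0 < e / 10" "\<forall>\<alpha><m. 10 * (e / 10) \<le> b \<alpha> - a \<alpha>" by auto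
  show ?thesis
    by (rule exI[of _ "16 * C + 1"], intro conjI exI[of _ "max (24 * C + 1) (1 / (e / 10 * sqrt (e / 10)))"]
        allI impI cdf_distance_le_stieltjes[OF C \<delta>]) (use C in auto)
qed

end
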